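(* There is an algorithm that, given an instance $\langle A,f,c\rangle$ with $f$ additive (specified by the values $f(\{i\})$ and costs $c_i$, $i\in A$, $|A|=n$), a budget $B\in(0,1]$, and $\varepsilon\in(0,1)$, outputs a set $T\subseteq A$ with $p(T)\le B$ and $$g(T)\ge(1-\varepsilon)\cdot\textsc{Max-Profit}(B),$$ in time polynomial in $n$ and $1/\varepsilon$.
   Context: An instance $\langle A,f,c\rangle$ consists of a finite set $A$ of agents, a monotone nondecreasing $f:2^A\to[0,1]$, and costs $c_i\ge0$. $f$ is additive if $f(S)=\sum_{i\in S}f(\{i\})$ with $f(\{i\})\ge0$. For $S\subseteq A$, $i\in S$: $f_S(i)=f(S)-f(S\setminus\{i\})$; $p(S)=\sum_{i\in S}c_i/f_S(i)$ (conventions: $0$ if $c_i=0=f_S(i)$, $\infty$ if $c_i>0=f_S(i)$), so for additive $f$, $p(S)=\sum_{i\in S}c_i/f(\{i\})$; the profit is $g(S)=(1-p(S))f(S)$, and $\textsc{Max-Profit}(B)=\max\{g(S):S\subseteq A,\ p(S)\le B\}$. *)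

theory Defs
  imports "HOL-Analysis.Analysis"
begin

definition marginal :: "('a set \<Rightarrow> real) \<Rightarrow> 'a set \<Rightarrow> 'a \<Rightarrow> real" where
  "marginal f S i = f S - f (S - {i})"

definition price_term :: "('a set \<Rightarrow> real) \<Rightarrow> ('a \<Rightarrow> real) \<Rightarrow> 'a set \<Rightarrow> 'a \<Rightarrow> ereal" where
  "price_term f c S i =
     (if marginal f S i = 0 then (if c i = 0 then 0 else \<infinity>)
      else ereal (c i / marginal f S i))"

definition price :: "('a set \<Rightarrow> real) \<Rightarrow> ('a \<Rightarrow> real) \<Rightarrow> 'a set \<Rightarrow> ereal" where
  "price f c S = (\<Sum>i\<in>S. price_term f c S i)"

text \<open>Profit g(S) = (1 - p(S)) f(S); only meaningful (and only used) when p(S) is finite.\<close>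
definition profit :: "('a set \<Rightarrow> real) \<Rightarrow> ('a \<Rightarrow> real) \<Rightarrow> 'a set \<Rightarrow> real" where
  "profit f c S = (1 - real_of_ereal (price f c S)) * f S"

definition max_profit :: "'a set \<Rightarrow> ('a set \<Rightarrow> real) \<Rightarrow> ('a \<Rightarrow> real) \<Rightarrow> real \<Rightarrow> real" where
  "max_profit A f c B = Max {profit f c S | S. S \<subseteq> A \<and> price f c S \<le> ereal B}"

definition additive_fun :: "('a \<Rightarrow> real) \<Rightarrow> 'a set \<Rightarrow> real" where
  "additive_fun v S = (\<Sum>i\<in>S. v i)"

type_synonym state = "nat \<Rightarrow> real"

datatype aexp = N real | R aexp | Plus aexp aexp | Minus aexp aexp | Mult aexp aexp
  | Divide aexp aexp | Floor aexp

datatype bexp = Less aexp aexp | Not bexp | And bexp bexp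

datatype com = SKIP | Assign aexp aexp | Seq com com | If bexp com com | While bexp com

definition reg_index :: "real \<Rightarrow> nat" where
  "reg_index x = nat \<lfloor>x\<rfloor>"

fun aval :: "aexp \<Rightarrow> state \<Rightarrow> real" where
  "aval (N r) s = r"
| "aval (R e) s = s (reg_index (aval e s))"
| "aval (Plus a b) s = aval a s + aval b s"
| "aval (Minus a b) s = aval a s - aval b s"
| "aval (Mult a b) s = aval a s * aval b s"
| "aval (Divide a b) s = aval a s / aval b s"
| "aval (Floor a) s = of_int \<lfloor>aval a s\<rfloor>"

fun bval :: "bexp \<Rightarrow> state \<Rightarrow> bool" where
  "bval (Less a b) s = (aval a s < aval b s)"
| "bval (Not b) s = (\<not> bval b s)"
| "bval (And a b) s = (bval a s \<and> bval b s)"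

text \<open>Big-step semantics with step counting: exec c s t s' means c started in s
  terminates in s' after t steps (each atomic command / test costs one step).\<close>
inductive exec :: "com \<Rightarrow> state \<Rightarrow> nat \<Rightarrow> state \<Rightarrow> bool" where
  Skip: "exec SKIP s 1 s"
| Assign: "exec (Assign l e) s 1 (s(reg_index (aval l s) := aval e s))"
| Seq: "exec c1 s t1 s1 \<Longrightarrow> exec c2 s1 t2 s2 \<Longrightarrow> exec (Seq c1 c2) s (t1 + t2) s2"
| IfTrue: "bval b s \<Longrightarrow> exec c1 s t s' \<Longrightarrow> exec (If b c1 c2) s (Suc t) s'"
| IfFalse: "\<not> bval b s \<Longrightarrow> exec c2 s t s' \<Longrightarrow> exec (If b c1 c2) s (Suc t) s'"
| WhileFalse: "\<not> bval b s \<Longrightarrow> exec (While b c) s 1 s"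
| WhileTrue: "bval b s \<Longrightarrow> exec c s t1 s1 \<Longrightarrow> exec (While b c) s1 t2 s2 \<Longrightarrow>
    exec (While b c) s (Suc (t1 + t2)) s2"

definition input_state :: "nat \<Rightarrow> (nat \<Rightarrow> real) \<Rightarrow> (nat \<Rightarrow> real) \<Rightarrow> real \<Rightarrow> real \<Rightarrow> state" where
  "input_state n v c B eps = (\<lambda>k.
     if k = 0 then real n
     else if k = 1 then B
     else if k = 2 then eps
     else if 3 \<le> k \<and> k < 3 + 2 * n then
       (if even (k - 3) then v ((k - 3) div 2) else c ((k - 3) div 2))
     else 0)"

definition output_set :: "nat \<Rightarrow> state \<Rightarrow> nat set" where
  "output_set n s = {i. i < n \<and> s (3 + 2 * n + i) \<noteq> 0}"

end

theory Submission
  imports Defs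
begin

text \<open>For additive \<open>f\<close>, items with \<open>f({i}) = 0\<close> can be dropped from any set of finite price, so
  \<open>p(S) = W(S) = \<Sum>c\<^sub>i/v\<^sub>i\<close> and \<open>g(S) = (1 - W(S)) V(S)\<close> with \<open>V(S) = \<Sum>v\<^sub>i\<close>.
  Guess the most valuable item \<open>j\<close> of an optimal set and round every \<open>v\<^sub>i \<le> v\<^sub>j\<close> down to a
  multiple of \<open>\<delta> = \<epsilon> v\<^sub>j / n\<close>: this loses at most \<open>n \<delta> = \<epsilon> v\<^sub>j \<le> \<epsilon> V(S)\<close> of value, and
  the rounded values are integers at most \<open>n/\<epsilon>\<close>. A knapsack dynamic programme over the rounded
  value \<open>q \<le> n\<^sup>2/\<epsilon>\<close>, keeping for each \<open>q\<close> a set of least weight \<open>W\<close>, therefore finds a set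
  whose profit is at least \<open>(1 - \<epsilon>)\<close> times the optimum. On the real RAM this takes \<open>O(n\<^sup>4/\<epsilon>)\<close>
  steps; sets are carried along as bit codes \<open>\<Sum>\<^sub>i\<^sub>\<in>\<^sub>T 2\<^sup>i\<close> and decoded with floor at the end.\<close>

definition runs_to :: "com \<Rightarrow> state \<Rightarrow> (nat \<Rightarrow> state \<Rightarrow> bool) \<Rightarrow> bool" where
  "runs_to c s P \<longleftrightarrow> (\<exists>t s'. exec c s t s' \<and> P t s')"

lemma runs_to_mono: "runs_to c s P \<Longrightarrow> (\<And>t s'. P t s' \<Longrightarrow> Q t s') \<Longrightarrow> runs_to c s Q"
  unfolding runs_to_def by blast

lemma runs_to_Seq:
  "runs_to c1 s (\<lambda>t1 s1. runs_to c2 s1 (\<lambda>t2 s2. Q (t1 + t2) s2)) \<Longrightarrow> runs_to (Seq c1 c2) s Q"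
  unfolding runs_to_def by (blast intro: exec.Seq)

lemma runs_to_Seq_exact:
  "runs_to c1 s (\<lambda>t s'. t = t1 \<and> s' = s1) \<Longrightarrow> runs_to c2 s1 (\<lambda>t s'. Q (t1 + t) s') \<Longrightarrow>
   runs_to (Seq c1 c2) s Q"
  by (rule runs_to_Seq, erule runs_to_mono) blast

lemma runs_to_Skip: "Q 1 s \<Longrightarrow> runs_to SKIP s Q"
  unfolding runs_to_def by (blast intro: exec.Skip)

lemma runs_to_Assign:
  "reg_index (aval l s) = a \<Longrightarrow> aval e s = x \<Longrightarrow> Q 1 (s(a := x)) \<Longrightarrow> runs_to (Assign l e) s Q"
  unfolding runs_to_def by (metis exec.Assign)

lemma runs_to_If:
  "(bval b s \<Longrightarrow> runs_to c1 s (\<lambda>t. Q (Suc t))) \<Longrightarrow> (\<not> bval b s \<Longrightarrow> runs_to c2 s (\<lambda>t. Q (Suc t)))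
   \<Longrightarrow> runs_to (If b c1 c2) s Q"
  unfolding runs_to_def by (cases "bval b s") (blast intro: exec.IfTrue exec.IfFalse)+

lemma runs_to_While_up:
  assumes "I i s" "i \<le> K"
    and guard: "\<And>i s. I i s \<Longrightarrow> i \<le> K \<Longrightarrow> bval b s \<longleftrightarrow> i < K"
    and step: "\<And>i s. I i s \<Longrightarrow> i < K \<Longrightarrow> runs_to c s (\<lambda>t s'. I (Suc i) s' \<and> t \<le> T)"
  shows "runs_to (While b c) s (\<lambda>t s'. I K s' \<and> t \<le> (K - i + 1) * (T + 1))"
  using assms(1,2)
proof (induction "K - i" arbitrary: i s)
  case 0
  then have "i = K" by simp
  then show ?case
    using 0 guard exec.WhileFalse[of b s c] unfolding runs_to_def by fastforce
next
  case (Suc d)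
  then have "i < K" by simp
  with step[OF Suc.prems(1)] obtain t1 s1
    where s1: "exec c s t1 s1" "I (Suc i) s1" "t1 \<le> T" unfolding runs_to_def by blast
  have "d = K - Suc i" "Suc i \<le> K" using Suc.hyps(2) \<open>i < K\<close> by auto
  from Suc.hyps(1)[OF this(1) s1(2) this(2)] obtain t2 s2
    where s2: "exec (While b c) s1 t2 s2" "I K s2" "t2 \<le> (K - Suc i + 1) * (T + 1)"
    unfolding runs_to_def by blast
  have "Suc (t1 + t2) \<le> (K - i + 1) * (T + 1)"
    using s1(3) s2(3) \<open>i < K\<close> by (simp add: Suc_diff_Suc algebra_simps)
  then show ?case
    using exec.WhileTrue[OF _ s1(1) s2(1)] guard[OF Suc.prems] \<open>i < K\<close> s2(2)
    unfolding runs_to_def by blast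
qed

lemma runs_to_While_down:
  assumes "I k s" "K \<le> k"
    and guard: "\<And>k s. I k s \<Longrightarrow> K \<le> k \<Longrightarrow> bval b s \<longleftrightarrow> K < k"
    and step: "\<And>k s. I k s \<Longrightarrow> K < k \<Longrightarrow> runs_to c s (\<lambda>t s'. I (k - 1) s' \<and> t \<le> T)"
  shows "runs_to (While b c) s (\<lambda>t s'. I K s' \<and> t \<le> (k - K + 1) * (T + 1))"
proof -
  have "runs_to (While b c) s (\<lambda>t s'. I (k - (k - K)) s' \<and> t \<le> (k - K - 0 + 1) * (T + 1))"
  proof (rule runs_to_While_up[where I = "\<lambda>i. I (k - i)"])
    show "I (k - 0) s" using assms(1) by simp
  next
    fix i s' assume "I (k - i) s'" "i \<le> k - K"
    moreover have "K \<le> k - i" "K < k - i \<longleftrightarrow> i < k - K"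
      using \<open>i \<le> k - K\<close> \<open>K \<le> k\<close> by arith+
    ultimately show "bval b s' \<longleftrightarrow> i < k - K"
      using guard[of "k - i" s'] by simp
  next
    fix i s' assume "I (k - i) s'" "i < k - K"
    moreover have "K < k - i" "k - Suc i = k - i - 1"
      using \<open>i < k - K\<close> by arith+
    ultimately show "runs_to c s' (\<lambda>t s''. I (k - Suc i) s'' \<and> t \<le> T)"
      using step[of "k - i" s'] by presburger
  qed simp
  then show ?thesis
    using \<open>K \<le> k\<close> by simp
qed

lemma reg_index_of_nat [simp]: "reg_index (real k) = k"
  by (simp add: reg_index_def)

lemma reg_index_numeral [simp]: "reg_index 0 = 0" "reg_index 1 = 1" "reg_index (numeral k) = numeral k"
  by (simp_all add: reg_index_def)

lemma sum_pow2_less: "T \<subseteq> {..<m} \<Longrightarrow> (\<Sum>i\<in>T. (2::nat) ^ i) < 2 ^ m"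
proof (induction m arbitrary: T)
  case 0
  then show ?case by simp
next
  case (Suc m)
  have fT: "finite T" using Suc.prems finite_subset by blast
  have sub: "T - {m} \<subseteq> {..<m}" using Suc.prems by (auto simp: less_Suc_eq)
  have "(\<Sum>i\<in>T. (2::nat) ^ i) \<le> (\<Sum>i\<in>insert m (T - {m}). 2 ^ i)"
    using fT by (intro sum_mono2) auto
  also have "\<dots> = 2 ^ m + (\<Sum>i\<in>T - {m}. 2 ^ i)" using fT by (subst sum.insert) auto
  also have "\<dots> < 2 ^ m + 2 ^ m" using Suc.IH[OF sub] by simp
  finally show ?case by simp
qed

lemma odd_sum_pow2_div_iff:
  assumes "finite T"
  shows "odd ((\<Sum>i\<in>T. (2::nat) ^ i) div 2 ^ m) \<longleftrightarrow> m \<in> T"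
proof -
  define low where "low = (\<Sum>i\<in>{i\<in>T. i < m}. (2::nat) ^ i)"
  define b where "b = (if m \<in> T then 1 else (0::nat))"
  define high where "high = (\<Sum>i\<in>{i\<in>T. m < i}. (2::nat) ^ (i - Suc m))"
  have split: "T = {i\<in>T. i < m} \<union> ({i\<in>T. i = m} \<union> {i\<in>T. m < i})" by auto
  have "(\<Sum>i\<in>T. (2::nat) ^ i)
      = low + ((\<Sum>i\<in>{i\<in>T. i = m}. 2 ^ i) + (\<Sum>i\<in>{i\<in>T. m < i}. 2 ^ i))"
    unfolding low_def using assms
    by (subst split, subst sum.union_disjoint, auto, subst sum.union_disjoint, auto)
  moreover have "(\<Sum>i\<in>{i\<in>T. i = m}. (2::nat) ^ i) = b * 2 ^ m"
  proof (cases "m \<in> T")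
    case True
    then have "{i\<in>T. i = m} = {m}" by auto
    then show ?thesis using True by (simp add: b_def)
  qed (simp add: b_def)
  moreover have "(\<Sum>i\<in>{i\<in>T. m < i}. (2::nat) ^ i) = 2 ^ m * (2 * high)"
  proof -
    have "(2::nat) ^ i = 2 ^ m * (2 * 2 ^ (i - Suc m))" if "m < i" for i
      using that by (simp flip: power_Suc power_add)
    then show ?thesis
      unfolding high_def by (simp add: sum_distrib_left)
  qed
  ultimately have "(\<Sum>i\<in>T. (2::nat) ^ i) = low + 2 ^ m * (b + 2 * high)"
    by (simp add: algebra_simps)
  moreover have "low < 2 ^ m" unfolding low_def by (rule sum_pow2_less) auto
  ultimately have "(\<Sum>i\<in>T. (2::nat) ^ i) div 2 ^ m = b + 2 * high" by simp
  then show ?thesis by (simp add: b_def)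
qed

definition bitcode :: "nat set \<Rightarrow> real" where
  "bitcode T = (\<Sum>i\<in>T. 2 ^ i)"

lemma bitcode_bit_iff:
  assumes "finite T"
  shows "of_int \<lfloor>bitcode T / 2 ^ m\<rfloor> - 2 * of_int \<lfloor>bitcode T / (2 * 2 ^ m)\<rfloor> \<noteq> (0::real) \<longleftrightarrow> m \<in> T"
proof -
  define X where "X = (\<Sum>i\<in>T. (2::nat) ^ i)"
  have X: "bitcode T = real X" unfolding bitcode_def X_def by simp
  have "\<lfloor>bitcode T / 2 ^ m\<rfloor> = int (X div 2 ^ m)"
    unfolding X using floor_divide_of_nat_eq[of X "2 ^ m"] by simp
  moreover have "\<lfloor>bitcode T / (2 * 2 ^ m)\<rfloor> = int (X div 2 ^ m div 2)"
    unfolding X using floor_divide_of_nat_eq[where 'a=real, of X "2 * 2 ^ m"]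
      div_mult2_eq[of X "2 ^ m" 2] by (simp add: mult.commute)
  moreover have "real (X div 2 ^ m) = real (X div 2 ^ m mod 2) + 2 * real (X div 2 ^ m div 2)"
    by (metis mod_mult_div_eq of_nat_add of_nat_mult of_nat_numeral)
  ultimately have "of_int \<lfloor>bitcode T / 2 ^ m\<rfloor> - 2 * of_int \<lfloor>bitcode T / (2 * 2 ^ m)\<rfloor>
      = real (X div 2 ^ m mod 2)"
    by simp
  then show ?thesis
    using odd_sum_pow2_div_iff[OF assms, of m] unfolding X_def by (simp add: odd_iff_mod_2_eq_one)
qed

lemma marginal_additive_fun: "finite S \<Longrightarrow> i \<in> S \<Longrightarrow> marginal (additive_fun v) S i = v i"
  unfolding marginal_def additive_fun_def by (simp add: sum_diff1)

lemma price_additive_fun: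
  assumes "finite S" "\<And>i. i \<in> S \<Longrightarrow> 0 < v i"
  shows "price (additive_fun v) c S = ereal (\<Sum>i\<in>S. c i / v i)"
  unfolding price_def price_term_def sum_ereal[symmetric]
  using assms by (intro sum.cong) (fastforce simp: marginal_additive_fun)+

text \<open>Items with \<open>v\<^sub>i = 0\<close> and \<open>c\<^sub>i > 0\<close> have infinite price, the others contribute nothing.\<close>

lemma additive_fun_positive_part:
  assumes "finite S" "\<And>i. i \<in> S \<Longrightarrow> 0 \<le> v i"
  shows "additive_fun v S = additive_fun v {i\<in>S. 0 < v i}"
  unfolding additive_fun_def
  using assms by (intro sum.mono_neutral_right) force+

lemma price_additive_fun_positive_part:
  assumes "finite S" "\<And>i. i \<in> S \<Longrightarrow> 0 \<le> v i" "price (additive_fun v) c S \<noteq> \<infinity>"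
  shows "price (additive_fun v) c S = price (additive_fun v) c {i\<in>S. 0 < v i}"
proof -
  have null: "price_term (additive_fun v) c S i = (if c i = 0 then 0 else \<infinity>)"
    if "i \<in> S - {i\<in>S. 0 < v i}" for i
  proof -
    have "v i = 0" using that assms(2)[of i] by auto
    then show ?thesis using that by (simp add: price_term_def marginal_additive_fun[OF assms(1)])
  qed
  have "c i = 0" if i: "i \<in> S - {i\<in>S. 0 < v i}" for i
  proof (rule ccontr)
    assume "c i \<noteq> 0"
    then have "price_term (additive_fun v) c S i = \<infinity>" using null[OF i] by simp
    then show False
      using assms(1,3) i unfolding price_def sum_Pinfty by blast
  qed
  with null have "price (additive_fun v) c S = (\<Sum>i\<in>{i\<in>S. 0 < v i}. price_term (additive_fun v) c S i)"
    unfolding price_def using assms(1) by (intro sum.mono_neutral_right) auto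
  also have "\<dots> = price (additive_fun v) c {i\<in>S. 0 < v i}"
    unfolding price_def price_term_def using assms(1)
    by (intro sum.cong) (auto simp: marginal_additive_fun)
  finally show ?thesis .
qed

lemma max_profit_le:
  assumes "finite A" "0 \<le> B"
    and "\<And>S. S \<subseteq> A \<Longrightarrow> price f c S \<le> ereal B \<Longrightarrow> x * profit f c S \<le> b"
  shows "x * max_profit A f c B \<le> b"
proof -
  let ?M = "{profit f c S | S. S \<subseteq> A \<and> price f c S \<le> ereal B}"
  have "?M \<subseteq> profit f c ` Pow A" by auto
  then have "finite ?M" using assms(1) finite_subset by blast
  moreover have "profit f c {} \<in> ?M" using assms(2) by (auto simp: price_def)
  ultimately have "Max ?M \<in> ?M" by (intro Max_in) auto
  then show ?thesis
    unfolding max_profit_def using assms(3) by auto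
qed

locale fptas =
  fixes n :: nat and v c :: "nat \<Rightarrow> real" and B eps :: real
  assumes v_nonneg: "\<And>i. i < n \<Longrightarrow> 0 \<le> v i" and c_nonneg: "\<And>i. i < n \<Longrightarrow> 0 \<le> c i"
    and B_pos: "0 < B" and B_le_1: "B \<le> 1" and eps_pos: "0 < eps"
begin

definition total_weight :: "nat set \<Rightarrow> real" where
  "total_weight T = (\<Sum>i\<in>T. c i / v i)"

definition total_value :: "nat set \<Rightarrow> real" where
  "total_value T = (\<Sum>i\<in>T. v i)"

definition knap_profit :: "nat set \<Rightarrow> real" where
  "knap_profit T = (1 - total_weight T) * total_value T"

definition feasible :: "nat set \<Rightarrow> bool" where
  "feasible T \<longleftrightarrow> T \<subseteq> {..<n} \<and> (\<forall>i\<in>T. 0 < v i) \<and> total_weight T \<le> B"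

definition items_upto :: "nat \<Rightarrow> nat set" where
  "items_upto j = {i. i < n \<and> 0 < v i \<and> v i \<le> v j}"

definition grain :: "nat \<Rightarrow> real" where
  "grain j = eps * v j / real n"

definition rounded :: "nat \<Rightarrow> nat \<Rightarrow> nat" where
  "rounded j i = nat \<lfloor>v i * real n / (eps * v j)\<rfloor>"

definition Q :: nat where
  "Q = nat \<lfloor>real n * real n / eps\<rfloor>"

text \<open>A cell of the table for \<open>j\<close> at rounded value \<open>q\<close> holds \<open>(3 - W(T), V(T), bitcode T)\<close> for a
  set \<open>T \<subseteq> items_upto j\<close> of rounded value \<open>q\<close>. The offset 3 lets zero-initialised memory stand for
  unreached cells, since reached ones have first component at least \<open>3 - B \<ge> 2\<close>.\<close>

abbreviation reached :: "real \<times> real \<times> real \<Rightarrow> bool" where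
  "reached e \<equiv> 3 - B \<le> fst e"

definition cell_profit :: "real \<times> real \<times> real \<Rightarrow> real" where
  "cell_profit e = (fst e - 2) * fst (snd e)"

definition add_item :: "nat \<Rightarrow> real \<times> real \<times> real \<Rightarrow> real \<times> real \<times> real" where
  "add_item i e = (fst e - c i / v i, fst (snd e) + v i, snd (snd e) + 2 ^ i)"

definition dp_step :: "nat \<Rightarrow> nat \<Rightarrow> (nat \<Rightarrow> real \<times> real \<times> real) \<Rightarrow> nat \<Rightarrow> real \<times> real \<times> real" where
  "dp_step j i T q = (let e = add_item i (T (q - rounded j i)) in
     if rounded j i \<le> q \<and> reached e \<and> fst (T q) < fst e then e else T q)"

fun dp_table :: "nat \<Rightarrow> nat \<Rightarrow> nat \<Rightarrow> real \<times> real \<times> real" where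
  "dp_table j 0 = (\<lambda>q. if q = 0 then (3, 0, 0) else (0, 0, 0))"
| "dp_table j (Suc m) = (if m \<in> items_upto j then dp_step j m (dp_table j m) else dp_table j m)"

lemma finite_items_upto [simp]: "finite (items_upto j)"
  unfolding items_upto_def by auto

lemma ratio_nonneg: "i \<in> items_upto j \<Longrightarrow> 0 \<le> c i / v i"
  using c_nonneg unfolding items_upto_def by auto

lemma knap_profit_nonneg: "feasible T \<Longrightarrow> 0 \<le> knap_profit T"
  unfolding feasible_def knap_profit_def total_value_def using B_le_1 v_nonneg
  by (intro mult_nonneg_nonneg sum_nonneg) auto

lemma dp_step_below: "q < rounded j i \<Longrightarrow> dp_step j i T q = T q"
  unfolding dp_step_def Let_def by simp

lemma dp_table_mono: "fst (dp_table j m q) \<le> fst (dp_table j (Suc m) q)"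
  by (auto simp: dp_step_def Let_def)

lemma dp_table_sound:
  "reached (dp_table j m q) \<Longrightarrow> \<exists>T. T \<subseteq> items_upto j \<inter> {..<m} \<and> sum (rounded j) T = q \<and>
     dp_table j m q = (3 - total_weight T, total_value T, bitcode T)"
proof (induction m arbitrary: q)
  case 0
  then have "q = 0" using B_le_1 by (auto split: if_splits)
  then show ?case by (intro exI[of _ "{}"]) (simp add: total_weight_def total_value_def bitcode_def)
next
  case (Suc m)
  define e where "e = dp_table j m (q - rounded j m)"
  show ?case
  proof (cases "m \<in> items_upto j \<and> rounded j m \<le> q \<and> reached (add_item m e) \<and>
      fst (dp_table j m q) < fst (add_item m e)")
    case False
    then have eq: "dp_table j (Suc m) q = dp_table j m q"
      by (auto simp add: dp_step_def Let_def e_def)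
    with Suc obtain T where "T \<subseteq> items_upto j \<inter> {..<m}" "sum (rounded j) T = q"
      "dp_table j m q = (3 - total_weight T, total_value T, bitcode T)" by auto
    with eq show ?thesis by (intro exI[of _ T]) auto
  next
    case True
    then have eq: "dp_table j (Suc m) q = add_item m e"
      by (simp add: dp_step_def Let_def e_def)
    have "reached e" using True ratio_nonneg[of m j] unfolding add_item_def by auto
    from Suc.IH[OF this[unfolded e_def]] obtain T where
      T: "T \<subseteq> items_upto j \<inter> {..<m}" "sum (rounded j) T = q - rounded j m"
        "e = (3 - total_weight T, total_value T, bitcode T)"
      unfolding e_def by auto
    have "m \<notin> T" "finite T" using T(1) finite_subset by auto
    then show ?thesis using T True eq
      by (intro exI[of _ "insert m T"])
        (auto simp: total_weight_def total_value_def bitcode_def add_item_def)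
  qed
qed

lemma dp_table_complete:
  "S \<subseteq> items_upto j \<inter> {..<m} \<Longrightarrow> total_weight S \<le> B \<Longrightarrow>
   3 - total_weight S \<le> fst (dp_table j m (sum (rounded j) S))"
proof (induction m arbitrary: S)
  case 0
  then show ?case by (simp add: total_weight_def)
next
  case (Suc m)
  show ?case
  proof (cases "m \<in> S")
    case False
    then have "S \<subseteq> items_upto j \<inter> {..<m}" using Suc.prems(1) by (auto simp: less_Suc_eq)
    from Suc.IH[OF this Suc.prems(2)] show ?thesis using dp_table_mono order_trans by blast
  next
    case True
    define S' where "S' = S - {m}"
    have m: "m \<in> items_upto j" using True Suc.prems by auto
    have "finite S" using Suc.prems(1) finite_subset by blast
    then have WS: "total_weight S = c m / v m + total_weight S'"
      and qS: "sum (rounded j) S = rounded j m + sum (rounded j) S'"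
      unfolding total_weight_def S'_def using True by (simp_all add: sum.remove)
    have S': "S' \<subseteq> items_upto j \<inter> {..<m}" using Suc.prems(1) unfolding S'_def by auto
    have "total_weight S' \<le> B" using WS ratio_nonneg[OF m] Suc.prems(2) by linarith
    from Suc.IH[OF S' this]
    have "3 - total_weight S \<le> fst (dp_table j m (sum (rounded j) S')) - c m / v m"
      using WS by simp
    then have "3 - total_weight S \<le> fst (dp_step j m (dp_table j m) (sum (rounded j) S))"
      using Suc.prems(2) unfolding dp_step_def Let_def add_item_def qS by auto
    then show ?thesis using m by simp
  qed
qed

lemma grain_rounded_le:
  assumes "i \<in> items_upto j"
  shows "grain j * real (rounded j i) \<le> v i"
    and "v i - grain j \<le> grain j * real (rounded j i)"
proof -
  have i: "i < n" "0 < v i" "v i \<le> v j" using assms unfolding items_upto_def by auto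
  define x where "x = v i * real n / (eps * v j)"
  have "0 \<le> x" using i eps_pos unfolding x_def by simp
  then have "real (rounded j i) \<le> x" "x - 1 \<le> real (rounded j i)"
    unfolding rounded_def x_def[symmetric] by linarith+
  moreover have "0 \<le> grain j" unfolding grain_def using eps_pos i by simp
  moreover have "grain j * x = v i" unfolding grain_def x_def using i eps_pos by (simp add: field_simps)
  ultimately show "grain j * real (rounded j i) \<le> v i" "v i - grain j \<le> grain j * real (rounded j i)"
    by (metis mult_left_mono, metis mult_left_mono right_diff_distrib mult.right_neutral)
qed

lemma rounded_le: "i \<in> items_upto j \<Longrightarrow> rounded j i \<le> nat \<lfloor>real n / eps\<rfloor>"
proof -
  assume "i \<in> items_upto j"
  then have "v i * real n / (eps * v j) \<le> real n / eps"
    using eps_pos unfolding items_upto_def by (simp add: field_simps mult_right_mono)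
  then show ?thesis unfolding rounded_def by (intro nat_mono floor_mono)
qed

lemma sum_rounded_le_Q:
  assumes "S \<subseteq> items_upto j"
  shows "sum (rounded j) S \<le> Q"
proof -
  define R where "R = nat \<lfloor>real n / eps\<rfloor>"
  have "card S \<le> n"
    using assms card_mono[of "{..<n}" S] unfolding items_upto_def by auto
  have "sum (rounded j) S \<le> card S * R"
    using assms rounded_le sum_bounded_above[of S "rounded j" R] unfolding R_def by auto
  also have "\<dots> \<le> n * R" using \<open>card S \<le> n\<close> by simp
  also have "n * R \<le> Q" unfolding Q_def
  proof (rule le_nat_floor)
    have "real R \<le> real n / eps" unfolding R_def using eps_pos by (intro of_nat_floor) simp
    then have "real n * real R \<le> real n * (real n / eps)" by (intro mult_left_mono) auto
    then show "real (n * R) \<le> real n * real n / eps" by simp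
  qed
  finally show ?thesis .
qed

lemma rounded_le_Q: "i \<in> items_upto j \<Longrightarrow> rounded j i \<le> Q"
  using sum_rounded_le_Q[of "{i}" j] by simp

lemma dp_entry_feasible:
  assumes "reached (dp_table j m q)"
  shows "\<exists>T. feasible T \<and> cell_profit (dp_table j m q) = knap_profit T \<and>
    snd (snd (dp_table j m q)) = bitcode T"
proof -
  from dp_table_sound[OF assms] obtain T where T: "T \<subseteq> items_upto j \<inter> {..<m}"
    "dp_table j m q = (3 - total_weight T, total_value T, bitcode T)" by blast
  then have "feasible T" using assms unfolding feasible_def items_upto_def by auto
  then show ?thesis using T by (intro exI[of _ T]) (auto simp: cell_profit_def knap_profit_def)
qed

lemma dp_step_improving:
  assumes "m \<in> items_upto j" "rounded j m \<le> q" and e: "e = add_item m (dp_table j m (q - rounded j m))"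
    and "reached e" "fst (dp_table j m q) < fst e"
  shows "0 < rounded j m" and "dp_table j (Suc m) q = e"
proof -
  show "0 < rounded j m"
  proof (rule ccontr)
    assume "\<not> 0 < rounded j m"
    then have "fst e \<le> fst (dp_table j m q)" using ratio_nonneg[OF assms(1)] unfolding e add_item_def by simp
    then show False using assms(5) by simp
  qed
  show "dp_table j (Suc m) q = e" using assms by (simp add: dp_step_def Let_def)
qed

text \<open>The cell at the rounded value \<open>q\<close> of \<open>S\<close> may hold another set \<open>T\<close>, but one with
  \<open>W(T) \<le> W(S)\<close> and, having the same rounded value, \<open>V(T) \<ge> \<delta> q\<close>.\<close>

lemma dp_table_lower_bound:
  assumes "0 < v j" "S \<subseteq> items_upto j" "total_weight S \<le> B"
  shows "reached (dp_table j n (sum (rounded j) S))"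
    and "(1 - total_weight S) * grain j * real (sum (rounded j) S)
       \<le> cell_profit (dp_table j n (sum (rounded j) S))"
proof -
  have "S \<subseteq> items_upto j \<inter> {..<n}" using assms(2) unfolding items_upto_def by auto
  from dp_table_complete[OF this assms(3)]
  have WS: "3 - total_weight S \<le> fst (dp_table j n (sum (rounded j) S))" .
  then show reached: "reached (dp_table j n (sum (rounded j) S))" using assms(3) by linarith
  from dp_table_sound[OF reached] obtain T where T: "T \<subseteq> items_upto j \<inter> {..<n}"
    "sum (rounded j) T = sum (rounded j) S"
    "dp_table j n (sum (rounded j) S) = (3 - total_weight T, total_value T, bitcode T)" by blast
  have "grain j * real (sum (rounded j) T) = (\<Sum>i\<in>T. grain j * real (rounded j i))"
    by (simp add: sum_distrib_left)
  also have "\<dots> \<le> total_value T" unfolding total_value_def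
    using T(1) grain_rounded_le(1) by (intro sum_mono) auto
  finally have "grain j * real (sum (rounded j) S) \<le> total_value T" using T(2) by simp
  moreover have "0 \<le> grain j" unfolding grain_def using eps_pos assms(1) by simp
  ultimately have "(1 - total_weight S) * (grain j * real (sum (rounded j) S)) \<le> (1 - total_weight T) * total_value T"
    using WS T(3) assms(3) B_le_1 by (intro mult_mono) (auto simp del: of_nat_sum)
  then show "(1 - total_weight S) * grain j * real (sum (rounded j) S)
       \<le> cell_profit (dp_table j n (sum (rounded j) S))"
    using T(3) by (simp add: cell_profit_def mult.assoc)
qed

text \<open>Each of the at most \<open>n\<close> items loses less than one grain \<open>\<epsilon> v\<^sub>j / n\<close>, and \<open>v\<^sub>j \<le> V(S)\<close>
  because \<open>j \<in> S\<close>.\<close>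

lemma rounding_loss:
  assumes "S \<subseteq> items_upto j" "j \<in> S"
  shows "(1 - eps) * total_value S \<le> grain j * real (sum (rounded j) S)"
proof -
  have fS: "finite S" using assms(1) by (rule finite_subset) simp
  have "j \<in> items_upto j" using assms by blast
  then have j: "j < n" "0 < v j" unfolding items_upto_def by simp_all
  have grain: "0 \<le> grain j" unfolding grain_def using eps_pos j by simp
  have per: "v i - grain j \<le> grain j * real (rounded j i)" if "i \<in> S" for i
    using that assms(1) grain_rounded_le(2) by blast
  have "total_value S - real (card S) * grain j = (\<Sum>i\<in>S. v i - grain j)"
    unfolding total_value_def by (simp add: sum_subtractf)
  also have "\<dots> \<le> (\<Sum>i\<in>S. grain j * real (rounded j i))"
    using per by (intro sum_mono) auto
  also have "\<dots> = grain j * real (sum (rounded j) S)" by (simp add: sum_distrib_left)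
  finally have lower: "total_value S - real (card S) * grain j \<le> grain j * real (sum (rounded j) S)" .
  have "card S \<le> n"
    using assms(1) card_mono[of "{..<n}" S] unfolding items_upto_def by auto
  then have "real (card S) * grain j \<le> real n * grain j"
    using grain by (intro mult_right_mono) auto
  also have "\<dots> = eps * v j" unfolding grain_def using j by simp
  also have "\<dots> \<le> eps * total_value S"
    unfolding total_value_def using eps_pos j fS assms unfolding items_upto_def
    by (intro mult_left_mono member_le_sum) auto
  finally have "real (card S) * grain j \<le> eps * total_value S" .
  then show ?thesis using lower by (simp add: algebra_simps del: of_nat_sum)
qed

lemma price_positive:
  "finite T \<Longrightarrow> (\<And>i. i \<in> T \<Longrightarrow> 0 < v i) \<Longrightarrow> price (additive_fun v) c T = ereal (total_weight T)"
  unfolding total_weight_def by (rule price_additive_fun)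

lemma profit_positive:
  "finite T \<Longrightarrow> (\<And>i. i \<in> T \<Longrightarrow> 0 < v i) \<Longrightarrow> profit (additive_fun v) c T = knap_profit T"
  unfolding profit_def knap_profit_def
  by (simp add: price_positive additive_fun_def total_value_def)

lemma feasible_price_profit:
  assumes "feasible T"
  shows "price (additive_fun v) c T \<le> ereal B" "profit (additive_fun v) c T = knap_profit T"
  using assms finite_subset[of T "{..<n}"] price_positive profit_positive unfolding feasible_def by auto

definition dominates_tables :: "nat \<Rightarrow> real \<Rightarrow> bool" where
  "dominates_tables jj b \<longleftrightarrow>
     (\<forall>j<jj. 0 < v j \<longrightarrow> (\<forall>q\<le>Q. reached (dp_table j n q) \<longrightarrow> cell_profit (dp_table j n q) \<le> b))"

lemma dominates_tables_mono: "dominates_tables jj b \<Longrightarrow> b \<le> b' \<Longrightarrow> dominates_tables jj b'"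
  unfolding dominates_tables_def by force

text \<open>The positive part of \<open>S\<close> has the same price and profit; apply \<open>rounding_loss\<close> to it, with
  \<open>j\<close> its most valuable item.\<close>

lemma dp_tables_approximate:
  assumes "dominates_tables n b" and "0 \<le> b" and S: "S \<subseteq> {..<n}" "price (additive_fun v) c S \<le> ereal B"
  shows "(1 - eps) * profit (additive_fun v) c S \<le> b"
proof -
  define P where "P = {i\<in>S. 0 < v i}"
  have fS: "finite S" using S(1) by (rule finite_subset) simp
  then have fP: "finite P" unfolding P_def by simp
  have vS: "\<And>i. i \<in> S \<Longrightarrow> 0 \<le> v i" using S(1) v_nonneg by blast
  have "price (additive_fun v) c S \<noteq> \<infinity>" using S(2) by auto
  from price_additive_fun_positive_part[OF fS vS this]
  have price_eq: "price (additive_fun v) c S = ereal (total_weight P)"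
    using price_positive[OF fP] unfolding P_def by simp
  then have WP: "total_weight P \<le> B" using S(2) by simp
  have "profit (additive_fun v) c S = knap_profit P"
    using additive_fun_positive_part[OF fS vS] price_eq
    unfolding profit_def knap_profit_def additive_fun_def total_value_def P_def by simp
  moreover have "(1 - eps) * knap_profit P \<le> b"
  proof (cases "P = {}")
    case True
    then show ?thesis using \<open>0 \<le> b\<close> by (simp add: knap_profit_def total_value_def)
  next
    case False
    have "Max (v ` P) \<in> v ` P" using fP False by (intro Max_in) auto
    then obtain j where j: "j \<in> P" "v j = Max (v ` P)" by auto
    then have "v i \<le> v j" if "i \<in> P" for i using fP that by simp
    then have P: "P \<subseteq> items_upto j" using S(1) unfolding items_upto_def P_def by auto
    have "j < n" "0 < v j" using j S(1) unfolding P_def by auto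
    have "0 \<le> 1 - total_weight P" using WP B_le_1 by simp
    have "(1 - eps) * knap_profit P = (1 - total_weight P) * ((1 - eps) * total_value P)"
      unfolding knap_profit_def by (simp add: ac_simps)
    also have "\<dots> \<le> (1 - total_weight P) * (grain j * real (sum (rounded j) P))"
      using rounding_loss[OF P j(1)] \<open>0 \<le> 1 - total_weight P\<close> by (rule mult_left_mono)
    also have "\<dots> \<le> cell_profit (dp_table j n (sum (rounded j) P))"
      using dp_table_lower_bound(2)[OF \<open>0 < v j\<close> P WP] by (simp add: mult.assoc)
    also have "\<dots> \<le> b"
      using assms(1)[unfolded dominates_tables_def, rule_format] \<open>j < n\<close> \<open>0 < v j\<close>
        sum_rounded_le_Q[OF P] dp_table_lower_bound(1)[OF \<open>0 < v j\<close> P WP] .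
    finally show ?thesis .
  qed
  ultimately show ?thesis by simp
qed

end

text \<open>Memory layout of the programme: registers \<open>0 .. 2 + 2n\<close> hold the input and
  \<open>3 + 2n .. 2 + 3n\<close> the output; \<open>reg k = 3 + 3n + k\<close> are working registers: 0 the guessed item
  \<open>j\<close>, 1 the item \<open>i\<close> being processed (later the bit being decoded), 2 \<open>2\<^sup>i\<close>, 3 the cell \<open>q\<close>,
  4 the rounded value of \<open>i\<close>, 5 \<open>c\<^sub>i/v\<^sub>i\<close>, 6 \<open>v\<^sub>i\<close>, 7 \<open>Q\<close>, 8 the base of the current table,
  9 and 10 the best profit found and its bit code, 11 \<open>v\<^sub>j\<close>, 12 the candidate first component of cell
  \<open>q\<close>. From \<open>reg 16\<close> on there is one fresh table of \<open>Q + 1\<close> three-register cells for every \<open>j\<close>,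
  so no table has to be cleared.\<close>

definition var_addr :: "nat \<Rightarrow> aexp" where
  "var_addr k = Plus (N (real k + 3)) (Mult (N 3) (R (N 0)))"

abbreviation var :: "nat \<Rightarrow> aexp" where
  "var k \<equiv> R (var_addr k)"

definition cell_addr :: "nat \<Rightarrow> aexp \<Rightarrow> aexp" where
  "cell_addr off e = Plus (Plus (var 8) (N (real off))) (Mult (N 3) e)"

definition val_in :: "aexp \<Rightarrow> aexp" where
  "val_in e = R (Plus (N 3) (Mult (N 2) e))"

definition cost_in :: "aexp \<Rightarrow> aexp" where
  "cost_in e = R (Plus (N 4) (Mult (N 2) e))"

definition out_addr :: aexp where
  "out_addr = Plus (Plus (N 3) (Mult (N 2) (R (N 0)))) (var 1)"

definition geq :: "aexp \<Rightarrow> aexp \<Rightarrow> bexp" where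
  "geq a b = Not (Less a b)"

definition cell_profit_exp :: aexp where
  "cell_profit_exp = Mult (Minus (R (cell_addr 0 (var 3))) (N 2)) (R (cell_addr 1 (var 3)))"

definition write_cell :: com where
  "write_cell =
    Seq (Assign (cell_addr 0 (var 3)) (var 12))
    (Seq (Assign (cell_addr 1 (var 3)) (Plus (R (cell_addr 1 (Minus (var 3) (var 4)))) (var 6)))
         (Assign (cell_addr 2 (var 3)) (Plus (R (cell_addr 2 (Minus (var 3) (var 4)))) (var 2))))"

definition record_best :: com where
  "record_best =
    If (Less (var 9) cell_profit_exp)
      (Seq (Assign (var_addr 9) cell_profit_exp) (Assign (var_addr 10) (R (cell_addr 2 (var 3)))))
      SKIP"

definition compute_candidate :: com where
  "compute_candidate =
    Seq (Assign (var_addr 3) (Minus (var 3) (N 1)))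
        (Assign (var_addr 12) (Minus (R (cell_addr 0 (Minus (var 3) (var 4)))) (var 5)))"

definition update_cell :: com where
  "update_cell =
    If (And (geq (var 12) (Minus (N 3) (R (N 1)))) (Less (R (cell_addr 0 (var 3))) (var 12)))
      (Seq write_cell record_best) SKIP"

definition cell_body :: com where
  "cell_body = Seq compute_candidate update_cell"

definition cell_loop :: com where
  "cell_loop = While (Less (var 4) (var 3)) cell_body"

definition next_item :: com where
  "next_item = Seq (Assign (var_addr 2) (Mult (N 2) (var 2))) (Assign (var_addr 1) (Plus (var 1) (N 1)))"

definition relax_item :: com where
  "relax_item =
    Seq (Assign (var_addr 5) (Divide (cost_in (var 1)) (var 6)))
    (Seq (Assign (var_addr 4) (Floor (Divide (Mult (var 6) (R (N 0))) (Mult (R (N 2)) (var 11)))))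
    (Seq (Assign (var_addr 3) (Plus (var 7) (N 1))) cell_loop))"

definition item_body :: com where
  "item_body =
    Seq (Assign (var_addr 6) (val_in (var 1)))
    (Seq (If (And (Less (N 0) (var 6)) (geq (var 11) (var 6))) relax_item SKIP) next_item)"

definition item_loop :: com where
  "item_loop = While (Less (var 1) (R (N 0))) item_body"

definition fill_table :: com where
  "fill_table =
    Seq (Assign (var_addr 8) (Plus (var_addr 16) (Mult (Mult (N 3) (Plus (var 7) (N 1))) (var 0))))
    (Seq (Assign (cell_addr 0 (N 0)) (N 3))
    (Seq (Assign (var_addr 1) (N 0)) (Seq (Assign (var_addr 2) (N 1)) item_loop)))"

definition scale_body :: com where
  "scale_body =
    Seq (Assign (var_addr 11) (val_in (var 0)))
    (Seq (If (Less (N 0) (var 11)) fill_table SKIP) (Assign (var_addr 0) (Plus (var 0) (N 1))))"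

definition scale_loop :: com where
  "scale_loop = While (Less (var 0) (R (N 0))) scale_body"

definition decode_body :: com where
  "decode_body =
    Seq (Assign out_addr
          (Minus (Floor (Divide (var 10) (var 2))) (Mult (N 2) (Floor (Divide (var 10) (Mult (N 2) (var 2)))))))
     next_item"

definition decode_loop :: com where
  "decode_loop = While (Less (var 1) (R (N 0))) decode_body"

definition decode_output :: com where
  "decode_output = Seq (Assign (var_addr 1) (N 0)) (Seq (Assign (var_addr 2) (N 1)) decode_loop)"

definition fptas_prog :: com where
  "fptas_prog = Seq (Assign (var_addr 7) (Floor (Divide (Mult (R (N 0)) (R (N 0))) (R (N 2))))) (Seq scale_loop decode_output)"

definition cell_at :: "state \<Rightarrow> nat \<Rightarrow> nat \<Rightarrow> real \<times> real \<times> real" where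
  "cell_at s b q = (s (b + 3 * q), s (b + 3 * q + 1), s (b + 3 * q + 2))"

lemma three_mult_neq [simp]:
  "Suc (3 * a) \<noteq> 3 * b" "3 * a \<noteq> Suc (3 * b)"
  "Suc (Suc (3 * a)) \<noteq> 3 * b" "3 * a \<noteq> Suc (Suc (3 * b))"
  for a b :: nat
  by presburger+

context fptas
begin

definition reg :: "nat \<Rightarrow> nat" where
  "reg k = 3 + 3 * n + k"

definition table_base :: "nat \<Rightarrow> nat" where
  "table_base j = reg 16 + 3 * (Q + 1) * j"

abbreviation table :: "nat \<Rightarrow> state \<Rightarrow> nat \<Rightarrow> real \<times> real \<times> real" where
  "table j s \<equiv> cell_at s (table_base j)"

definition holds_input :: "state \<Rightarrow> bool" where
  "holds_input s \<longleftrightarrow> s 0 = real n \<and> s 1 = B \<and> s 2 = eps \<and> (\<forall>i<n. s (3 + 2 * i) = v i \<and> s (4 + 2 * i) = c i)"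

lemma holds_input_upd [simp]: "3 + 2 * n \<le> a \<Longrightarrow> holds_input (s(a := x)) = holds_input s"
  unfolding holds_input_def by auto

lemma holds_input_input_state: "holds_input (input_state n v c B eps)"
  unfolding holds_input_def input_state_def by auto

lemma input_state_high: "3 + 2 * n \<le> a \<Longrightarrow> input_state n v c B eps a = 0"
  unfolding input_state_def by auto

lemma reg_ge [simp]: "3 + 2 * n \<le> reg k"
  by (simp add: reg_def)

lemma reg_inj [simp]: "reg k = reg k' \<longleftrightarrow> k = k'"
  by (simp add: reg_def)

lemma reg_ne_small [simp]: "reg k \<noteq> 0" "reg k \<noteq> 1" "reg k \<noteq> 2" "reg k \<noteq> Suc 0"
  "0 \<noteq> reg k" "1 \<noteq> reg k" "2 \<noteq> reg k" "Suc 0 \<noteq> reg k"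
  by (simp_all add: reg_def)

lemma input_ne_reg [simp]: "i < n \<Longrightarrow> reg k \<noteq> 3 + 2 * i" "i < n \<Longrightarrow> reg k \<noteq> 4 + 2 * i"
  "i < n \<Longrightarrow> 3 + 2 * i \<noteq> reg k" "i < n \<Longrightarrow> 4 + 2 * i \<noteq> reg k"
  by (simp_all add: reg_def)

lemma output_ne_reg [simp]: "i < n \<Longrightarrow> reg k \<noteq> 3 + 2 * n + i" "i < n \<Longrightarrow> 3 + 2 * n + i \<noteq> reg k"
  by (simp_all add: reg_def)

lemma reg_less_table [simp]: "k < 16 \<Longrightarrow> reg k < table_base j + x"
  by (simp add: table_base_def reg_def)

lemma reg_ne_table [simp]:
  "k < 16 \<Longrightarrow> reg k \<noteq> table_base j + x" "k < 16 \<Longrightarrow> table_base j + x \<noteq> reg k"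
  "k < 16 \<Longrightarrow> reg k \<noteq> table_base j + x + y" "k < 16 \<Longrightarrow> table_base j + x + y \<noteq> reg k"
  "k < 16 \<Longrightarrow> reg k \<noteq> table_base j" "k < 16 \<Longrightarrow> table_base j \<noteq> reg k"
  "k < 16 \<Longrightarrow> reg k \<noteq> Suc (table_base j + x)" "k < 16 \<Longrightarrow> Suc (table_base j + x) \<noteq> reg k"
  "k < 16 \<Longrightarrow> reg k \<noteq> Suc (Suc (table_base j + x))" "k < 16 \<Longrightarrow> Suc (Suc (table_base j + x)) \<noteq> reg k"
  "k < 16 \<Longrightarrow> reg k \<noteq> Suc (table_base j)" "k < 16 \<Longrightarrow> Suc (table_base j) \<noteq> reg k"
  "k < 16 \<Longrightarrow> reg k \<noteq> Suc (Suc (table_base j))" "k < 16 \<Longrightarrow> Suc (Suc (table_base j)) \<noteq> reg k"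
  by (simp_all add: table_base_def reg_def)

lemma reg_less_table_base [simp]: "k < 16 \<Longrightarrow> reg k < table_base j" "k < 16 \<Longrightarrow> (table_base j \<le> reg k) = False"
  by (simp_all add: table_base_def reg_def)

lemma table_ge [simp]: "3 + 2 * n \<le> table_base j + x" "3 + 2 * n \<le> table_base j"
  "3 + 2 * n \<le> Suc (table_base j + x)" "3 + 2 * n \<le> Suc (Suc (table_base j + x))"
  by (simp_all add: table_base_def reg_def)

lemma table_ne_small [simp]:
  "table_base j + x \<noteq> 0" "table_base j + x \<noteq> Suc 0" "table_base j + x \<noteq> 2"
  "table_base j + x + y \<noteq> 0" "table_base j + x + y \<noteq> Suc 0" "table_base j + x + y \<noteq> 2"
  "0 \<noteq> table_base j + x" "Suc 0 \<noteq> table_base j + x" "2 \<noteq> table_base j + x"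
  "0 \<noteq> table_base j + x + y" "Suc 0 \<noteq> table_base j + x + y" "2 \<noteq> table_base j + x + y"
  "Suc (table_base j + x) \<noteq> 0" "Suc (table_base j + x) \<noteq> Suc 0" "Suc (table_base j + x) \<noteq> 2"
  "0 \<noteq> Suc (table_base j + x)" "Suc 0 \<noteq> Suc (table_base j + x)" "2 \<noteq> Suc (table_base j + x)"
  "table_base j \<noteq> 0" "table_base j \<noteq> Suc 0"
  by (simp_all add: table_base_def reg_def)

lemma table_base_less_table_base_Suc [simp]:
  "table_base j < table_base (Suc j)" "\<not> table_base (Suc j) \<le> table_base j"
  by (simp_all add: table_base_def)

lemma table_base_less_Suc: "table_base j + 3 * q + 2 < table_base (Suc j)" if "q \<le> Q"
  using that by (simp add: table_base_def)

lemma table_upd_below: "a < table_base j \<Longrightarrow> table j (s(a := x)) = table j s"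
  by (rule ext) (simp add: cell_at_def)

lemma table_upd_reg [simp]: "k < 16 \<Longrightarrow> table j (s(reg k := x)) = table j s"
  by (rule table_upd_below) simp

lemma aval_var_addr [simp]: "s 0 = real n \<Longrightarrow> aval (var_addr k) s = real (reg k)"
  by (simp add: var_addr_def reg_def algebra_simps)

lemma aval_cell_addr:
  "s 0 = real n \<Longrightarrow> s (reg 8) = real b \<Longrightarrow> aval e s = real q \<Longrightarrow> aval (cell_addr off e) s = real (b + 3 * q + off)"
  by (simp add: cell_addr_def algebra_simps)

lemma aval_read_cell:
  "s 0 = real n \<Longrightarrow> s (reg 8) = real b \<Longrightarrow> aval e s = real q \<Longrightarrow> aval (R (cell_addr off e)) s = s (b + 3 * q + off)"
  by (simp only: aval.simps aval_cell_addr reg_index_of_nat)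

lemma aval_read_current_cell:
  assumes "s 0 = real n" "s (reg 8) = real (table_base j)" "s (reg 3) = real q"
  shows "aval (R (cell_addr 0 (var 3))) s = fst (table j s q)"
    and "aval (R (cell_addr 1 (var 3))) s = fst (snd (table j s q))"
    and "aval (R (cell_addr 2 (var 3))) s = snd (snd (table j s q))"
proof -
  have "aval (var 3) s = real q" using assms(1,3) by simp
  from aval_read_cell[OF assms(1,2) this] show
    "aval (R (cell_addr 0 (var 3))) s = fst (table j s q)"
    "aval (R (cell_addr 1 (var 3))) s = fst (snd (table j s q))"
    "aval (R (cell_addr 2 (var 3))) s = snd (snd (table j s q))"
    by (simp_all add: cell_at_def)
qed

lemma aval_val_in: "aval e s = real m \<Longrightarrow> aval (val_in e) s = s (3 + 2 * m)"
  using reg_index_of_nat[of "3 + 2 * m"] unfolding val_in_def by simp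

lemma aval_cost_in: "aval e s = real m \<Longrightarrow> aval (cost_in e) s = s (4 + 2 * m)"
  using reg_index_of_nat[of "4 + 2 * m"] unfolding cost_in_def by simp

lemma runs_to_assign_var:
  "s 0 = real n \<Longrightarrow> aval e s = x \<Longrightarrow> P 1 (s(reg k := x)) \<Longrightarrow> runs_to (Assign (var_addr k) e) s P"
  by (rule runs_to_Assign) auto

lemma runs_to_assign_cell:
  "s 0 = real n \<Longrightarrow> s (reg 8) = real b \<Longrightarrow> aval e s = real q \<Longrightarrow> aval x s = y \<Longrightarrow>
   P 1 (s(b + 3 * q + off := y)) \<Longrightarrow> runs_to (Assign (cell_addr off e) x) s P"
  by (rule runs_to_Assign) (simp_all only: aval_cell_addr reg_index_of_nat)

definition best_feasible :: "state \<Rightarrow> bool" where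
  "best_feasible s \<longleftrightarrow> (\<exists>T. feasible T \<and> s (reg 9) = knap_profit T \<and> s (reg 10) = bitcode T)"

lemma best_feasible_nonneg: "best_feasible s \<Longrightarrow> 0 \<le> s (reg 9)"
  unfolding best_feasible_def using knap_profit_nonneg by auto

lemma best_feasible_upd [simp]:
  "k \<noteq> 9 \<Longrightarrow> k \<noteq> 10 \<Longrightarrow> best_feasible (s(reg k := x)) = best_feasible s"
  "best_feasible (s(table_base j + k' := x)) = best_feasible s"
  "best_feasible (s(table_base j := x)) = best_feasible s"
  unfolding best_feasible_def by simp_all

lemma write_cell_runs:
  assumes "s 0 = real n" "s (reg 8) = real (table_base j)" "s (reg 3) = real q" "s (reg 4) = real r"
    and "0 < r" "r \<le> q"
  shows "runs_to write_cell s (\<lambda>t s'. t = 3 \<and> s' = s(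
    table_base j + 3 * q := s (reg 12),
    table_base j + 3 * q + 1 := fst (snd (table j s (q - r))) + s (reg 6),
    table_base j + 3 * q + 2 := snd (snd (table j s (q - r))) + s (reg 2)))"
proof -
  let ?b = "table_base j"
  define s1 where "s1 = s(?b + 3 * q := s (reg 12))"
  define s2 where "s2 = s1(?b + 3 * q + 1 := fst (snd (table j s (q - r))) + s (reg 6))"
  define s3 where "s3 = s2(?b + 3 * q + 2 := snd (snd (table j s (q - r))) + s (reg 2))"
  have qr: "q - r \<noteq> q" using assms(5,6) by simp
  have regs: "s' 0 = real n" "s' (reg 8) = real ?b" "aval (var 3) s' = real q"
      "aval (Minus (var 3) (var 4)) s' = real (q - r)"
    if "s' \<in> {s, s1, s2}" for s'
    using that assms by (auto simp: s1_def s2_def of_nat_diff)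
  have r0: "s 0 = real n" "s (reg 8) = real ?b" "aval (var 3) s = real q" and
    r1: "s1 0 = real n" "s1 (reg 8) = real ?b" "aval (var 3) s1 = real q"
      "aval (Minus (var 3) (var 4)) s1 = real (q - r)" and
    r2: "s2 0 = real n" "s2 (reg 8) = real ?b" "aval (var 3) s2 = real q"
      "aval (Minus (var 3) (var 4)) s2 = real (q - r)"
    using regs[of s] regs[of s1] regs[of s2] by simp_all
  have w1: "runs_to (Assign (cell_addr 0 (var 3)) (var 12)) s (\<lambda>t s'. t = 1 \<and> s' = s1)"
    by (rule runs_to_assign_cell[OF r0]) (simp_all add: s1_def r0(1))
  have "aval (R (cell_addr 1 (Minus (var 3) (var 4)))) s1 = s1 (?b + 3 * (q - r) + 1)"
    by (rule aval_read_cell[OF r1(1,2,4)])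
  then have w2: "runs_to (Assign (cell_addr 1 (var 3)) (Plus (R (cell_addr 1 (Minus (var 3) (var 4)))) (var 6)))
      s1 (\<lambda>t s'. t = 1 \<and> s' = s2)"
    using r1(1) by (intro runs_to_assign_cell[OF r1(1-3)]) (simp_all add: s2_def s1_def cell_at_def qr)
  have "aval (R (cell_addr 2 (Minus (var 3) (var 4)))) s2 = s2 (?b + 3 * (q - r) + 2)"
    by (rule aval_read_cell[OF r2(1,2,4)])
  then have w3: "runs_to (Assign (cell_addr 2 (var 3)) (Plus (R (cell_addr 2 (Minus (var 3) (var 4)))) (var 2)))
      s2 (\<lambda>t s'. t = 1 \<and> s' = s3)"
    using r2(1) by (intro runs_to_assign_cell[OF r2(1-3)]) (simp_all add: s3_def s2_def s1_def cell_at_def qr)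
  have "runs_to write_cell s (\<lambda>t s'. t = 3 \<and> s' = s3)"
    unfolding write_cell_def
    by (rule runs_to_Seq_exact[OF w1 runs_to_Seq_exact[OF w2]], rule runs_to_mono[OF w3]) simp
  then show ?thesis by (simp add: s3_def s2_def s1_def)
qed

lemma record_best_runs:
  assumes "s 0 = real n" "s (reg 8) = real (table_base j)" "s (reg 3) = real q"
  shows "runs_to record_best s (\<lambda>t s'. t \<le> 4 \<and> s' =
    (if s (reg 9) < cell_profit (table j s q)
     then s(reg 9 := cell_profit (table j s q), reg 10 := snd (snd (table j s q))) else s))"
proof -
  let ?p = "cell_profit (table j s q)" and ?code = "snd (snd (table j s q))"
  have "aval cell_profit_exp s = ?p"
    unfolding cell_profit_exp_def using aval_read_current_cell[OF assms] by (simp add: cell_profit_def)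
  then have test: "bval (Less (var 9) cell_profit_exp) s \<longleftrightarrow> s (reg 9) < ?p"
    and a9: "runs_to (Assign (var_addr 9) cell_profit_exp) s (\<lambda>t s'. t = 1 \<and> s' = s(reg 9 := ?p))"
    using assms(1) by (auto intro: runs_to_assign_var)
  have "aval (R (cell_addr 2 (var 3))) (s(reg 9 := ?p)) = ?code"
    using aval_read_current_cell(3)[of "s(reg 9 := ?p)"] assms by (simp add: cell_at_def)
  then have a10: "runs_to (Assign (var_addr 10) (R (cell_addr 2 (var 3)))) (s(reg 9 := ?p))
      (\<lambda>t s'. 1 + t = 2 \<and> s' = s(reg 9 := ?p, reg 10 := ?code))"
    using assms(1) by (intro runs_to_assign_var) simp_all
  show ?thesis
    unfolding record_best_def
  proof (rule runs_to_If)
    assume "bval (Less (var 9) cell_profit_exp) s"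
    then show "runs_to (Seq (Assign (var_addr 9) cell_profit_exp) (Assign (var_addr 10) (R (cell_addr 2 (var 3))))) s
      (\<lambda>t s'. Suc t \<le> 4 \<and> s' = (if s (reg 9) < ?p then s(reg 9 := ?p, reg 10 := ?code) else s))"
      using test by (intro runs_to_mono[OF runs_to_Seq_exact[OF a9 a10]]) auto
  next
    assume "\<not> bval (Less (var 9) cell_profit_exp) s"
    then show "runs_to SKIP s
      (\<lambda>t s'. Suc t \<le> 4 \<and> s' = (if s (reg 9) < ?p then s(reg 9 := ?p, reg 10 := ?code) else s))"
      using test by (intro runs_to_Skip) simp
  qed
qed

definition commit_cell :: "nat \<Rightarrow> nat \<Rightarrow> real \<times> real \<times> real \<Rightarrow> state \<Rightarrow> state" where
  "commit_cell j q e s =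
    (let s' = s(table_base j + 3 * q := fst e, table_base j + 3 * q + 1 := fst (snd e),
                table_base j + 3 * q + 2 := snd (snd e))
     in if s' (reg 9) < cell_profit e then s'(reg 9 := cell_profit e, reg 10 := snd (snd e)) else s')"

lemma commit_cell_runs:
  assumes "s 0 = real n" "s (reg 8) = real (table_base j)" "s (reg 3) = real q" "s (reg 4) = real r"
    and "0 < r" "r \<le> q" and "s (reg 12) = fst e"
    and "fst (snd (table j s (q - r))) + s (reg 6) = fst (snd e)"
    and "snd (snd (table j s (q - r))) + s (reg 2) = snd (snd e)"
  shows "runs_to (Seq write_cell record_best) s (\<lambda>t s'. t \<le> 7 \<and> s' = commit_cell j q e s)"
proof -
  define s' where "s' = s(table_base j + 3 * q := fst e, table_base j + 3 * q + 1 := fst (snd e),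
    table_base j + 3 * q + 2 := snd (snd e))"
  have wc: "runs_to write_cell s (\<lambda>t s''. t = 3 \<and> s'' = s')"
    using write_cell_runs[OF assms(1-6)] assms(7-9) unfolding s'_def by simp
  have "s' 0 = real n" "s' (reg 8) = real (table_base j)" "s' (reg 3) = real q"
    using assms(1-3) by (simp_all add: s'_def)
  note rb = record_best_runs[OF this]
  have cell: "table j s' q = e" by (simp add: s'_def cell_at_def)
  have commit: "commit_cell j q e s
      = (if s' (reg 9) < cell_profit e then s'(reg 9 := cell_profit e, reg 10 := snd (snd e)) else s')"
    unfolding commit_cell_def Let_def s'_def ..
  have "runs_to record_best s' (\<lambda>t s''. t \<le> 4 \<and> s'' = commit_cell j q e s)"
    using rb unfolding cell commit .
  then show ?thesis
    by (intro runs_to_Seq_exact[OF wc runs_to_mono]) auto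
qed

text \<open>\<open>b0\<close> is the best profit found before table \<open>jj\<close> was started.\<close>

definition table_ctx :: "nat \<Rightarrow> real \<Rightarrow> state \<Rightarrow> bool" where
  "table_ctx jj b0 s \<longleftrightarrow> holds_input s \<and> jj < n \<and> 0 < v jj \<and> s (reg 0) = real jj \<and> s (reg 7) = real Q
     \<and> s (reg 11) = v jj \<and> s (reg 8) = real (table_base jj) \<and> b0 \<le> s (reg 9) \<and> best_feasible s
     \<and> (\<forall>q\<le>Q. reached (table jj s q) \<longrightarrow> cell_profit (table jj s q) \<le> s (reg 9))
     \<and> (\<forall>a\<ge>table_base (Suc jj). s a = 0)"

text \<open>The cells \<open>k\<close> are swept downwards, so updating the table in place for item \<open>m\<close> only
  reads cells of the previous stage.\<close>

definition cell_inv :: "nat \<Rightarrow> real \<Rightarrow> nat \<Rightarrow> nat \<Rightarrow> state \<Rightarrow> bool" where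
  "cell_inv jj b0 m k s \<longleftrightarrow> table_ctx jj b0 s \<and> m \<in> items_upto jj
     \<and> s (reg 1) = real m \<and> s (reg 2) = 2 ^ m \<and> s (reg 6) = v m \<and> s (reg 5) = c m / v m
     \<and> s (reg 4) = real (rounded jj m) \<and> s (reg 3) = real k \<and> rounded jj m \<le> k \<and> k \<le> Q + 1
     \<and> (\<forall>q\<le>Q. table jj s q = (if k \<le> q then dp_step jj m (dp_table jj m) q else dp_table jj m q))"

lemma table_ctx_upd [simp]:
  assumes "k < 16" "k \<notin> {0, 7, 8, 9, 10, 11}"
  shows "table_ctx jj b0 (s(reg k := x)) = table_ctx jj b0 s"
proof -
  have "reg k < table_base (Suc jj)" using assms(1) by simp
  then have "(\<forall>a\<ge>table_base (Suc jj). (s(reg k := x)) a = 0) \<longleftrightarrow> (\<forall>a\<ge>table_base (Suc jj). s a = 0)"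
    by auto
  then show ?thesis using assms unfolding table_ctx_def by simp
qed

lemma cell_inv_step:
  assumes I: "cell_inv jj b0 m (Suc q) s" and "rounded jj m \<le> q"
    and "holds_input s'" and "\<forall>r\<in>{0, 1, 2, 4, 5, 6, 7, 8, 11}. s' (reg r) = s (reg r)"
    and "s' (reg 3) = real q"
    and table: "table jj s' = (table jj s)(q := dp_step jj m (dp_table jj m) q)"
    and "\<forall>a\<ge>table_base (Suc jj). s' a = 0"
    and "best_feasible s'" and best: "s (reg 9) \<le> s' (reg 9)"
    and new: "reached (table jj s' q) \<longrightarrow> cell_profit (table jj s' q) \<le> s' (reg 9)"
  shows "cell_inv jj b0 m q s'"
proof -
  have old: "\<forall>q\<le>Q. reached (table jj s q) \<longrightarrow> cell_profit (table jj s q) \<le> s (reg 9)"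
    and cells: "\<forall>q'\<le>Q. table jj s q' = (if Suc q \<le> q' then dp_step jj m (dp_table jj m) q' else dp_table jj m q')"
    using I unfolding cell_inv_def table_ctx_def by blast+
  have "\<forall>q'\<le>Q. table jj s' q' = (if q \<le> q' then dp_step jj m (dp_table jj m) q' else dp_table jj m q')"
    using cells table by auto
  moreover have "\<forall>q\<le>Q. reached (table jj s' q) \<longrightarrow> cell_profit (table jj s' q) \<le> s' (reg 9)"
    using old new best table by (auto simp: fun_upd_apply intro: order_trans)
  ultimately show ?thesis
    using assms unfolding cell_inv_def table_ctx_def by auto
qed

lemma cell_inv_cells:
  assumes "cell_inv jj b0 m (Suc q) s" "q' \<le> q"
  shows "table jj s q' = dp_table jj m q'"
  using assms unfolding cell_inv_def by auto

lemma compute_candidate_runs: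
  assumes I: "cell_inv jj b0 m (Suc q) s" and "rounded jj m \<le> q"
  shows "runs_to compute_candidate s (\<lambda>t s'. t = 2 \<and>
    s' = s(reg 3 := real q, reg 12 := fst (add_item m (dp_table jj m (q - rounded jj m)))))"
proof -
  let ?b = "table_base jj" and ?r = "rounded jj m"
  let ?s1 = "s(reg 3 := real q)"
  have n0: "s 0 = real n" and b8: "s (reg 8) = real ?b"
    and regs: "s (reg 5) = c m / v m" "s (reg 4) = real ?r" "s (reg 3) = real (Suc q)"
    using I unfolding cell_inv_def table_ctx_def holds_input_def by blast+
  have dec: "runs_to (Assign (var_addr 3) (Minus (var 3) (N 1))) s (\<lambda>t s'. t = 1 \<and> s' = ?s1)"
    by (rule runs_to_assign_var[where s = s, OF n0]) (simp_all add: n0 regs)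
  have "aval (R (cell_addr 0 (Minus (var 3) (var 4)))) ?s1 = ?s1 (?b + 3 * (q - ?r) + 0)"
    by (rule aval_read_cell) (use n0 b8 regs assms(2) in \<open>simp_all add: of_nat_diff\<close>)
  also have "\<dots> = fst (dp_table jj m (q - ?r))"
    using cell_inv_cells[OF I, of "q - ?r", symmetric] by (simp add: cell_at_def)
  finally have "aval (Minus (R (cell_addr 0 (Minus (var 3) (var 4)))) (var 5)) ?s1
      = fst (add_item m (dp_table jj m (q - ?r)))"
    unfolding aval.simps(4) using n0 regs by (simp add: add_item_def)
  from runs_to_assign_var[where s = ?s1 and k = 12, OF _ this]
  have "runs_to (Assign (var_addr 12) (Minus (R (cell_addr 0 (Minus (var 3) (var 4)))) (var 5))) ?s1
      (\<lambda>t s'. 1 + t = 2 \<and> s' = ?s1(reg 12 := fst (add_item m (dp_table jj m (q - ?r)))))"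
    using n0 by simp
  then show ?thesis
    unfolding compute_candidate_def by (rule runs_to_Seq_exact[OF dec])
qed

lemma cell_keep:
  assumes I: "cell_inv jj b0 m (Suc q) s" and "rounded jj m \<le> q"
    and "dp_step jj m (dp_table jj m) q = dp_table jj m q"
  shows "cell_inv jj b0 m q (s(reg 3 := real q, reg 12 := x))"
proof (rule cell_inv_step[OF I \<open>rounded jj m \<le> q\<close>])
  let ?s' = "s(reg 3 := real q, reg 12 := x)"
  have "holds_input s" "best_feasible s" and zero: "\<forall>a\<ge>table_base (Suc jj). s a = 0"
    and old: "\<forall>q\<le>Q. reached (table jj s q) \<longrightarrow> cell_profit (table jj s q) \<le> s (reg 9)"
    using I unfolding cell_inv_def table_ctx_def by blast+
  have "q \<le> Q" using I unfolding cell_inv_def by simp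
  show "holds_input ?s'" using \<open>holds_input s\<close> by simp
  show "best_feasible ?s'" using \<open>best_feasible s\<close> by simp
  show "\<forall>a\<ge>table_base (Suc jj). ?s' a = 0" using zero by auto
  show "reached (table jj ?s' q) \<longrightarrow> cell_profit (table jj ?s' q) \<le> ?s' (reg 9)"
    using old \<open>q \<le> Q\<close> by simp
  show "table jj ?s' = (table jj s)(q := dp_step jj m (dp_table jj m) q)"
    using cell_inv_cells[OF I, of q] assms(3) by auto
qed auto

lemma cell_inv_commit:
  assumes I: "cell_inv jj b0 m (Suc q) s" and "rounded jj m \<le> q"
    and "dp_table jj (Suc m) q = e" "reached e"
  shows "cell_inv jj b0 m q (commit_cell jj q e (s(reg 3 := real q, reg 12 := x)))"
    (is "cell_inv jj b0 m q ?s'")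
proof (rule cell_inv_step[OF I \<open>rounded jj m \<le> q\<close>])
  have "holds_input s" "best_feasible s" and zero: "\<forall>a\<ge>table_base (Suc jj). s a = 0"
    using I unfolding cell_inv_def table_ctx_def by blast+
  have "q \<le> Q" "m \<in> items_upto jj" using I unfolding cell_inv_def by simp_all
  obtain T where T: "feasible T" "cell_profit e = knap_profit T" "snd (snd e) = bitcode T"
    using dp_entry_feasible[of jj "Suc m" q] assms(3,4) by auto
  show "holds_input ?s'" using \<open>holds_input s\<close> by (simp add: commit_cell_def Let_def)
  show "\<forall>r\<in>{0, 1, 2, 4, 5, 6, 7, 8, 11}. ?s' (reg r) = s (reg r)" by (simp add: commit_cell_def Let_def)
  show "?s' (reg 3) = real q" by (simp add: commit_cell_def Let_def)
  have table: "table jj ?s' = (table jj s)(q := e)"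
    by (rule ext) (simp add: commit_cell_def Let_def cell_at_def)
  then show "table jj ?s' = (table jj s)(q := dp_step jj m (dp_table jj m) q)"
    using assms(3) \<open>m \<in> items_upto jj\<close> by simp
  show "\<forall>a\<ge>table_base (Suc jj). ?s' a = 0"
    using zero table_base_less_Suc[OF \<open>q \<le> Q\<close>, of jj] by (simp add: commit_cell_def Let_def)
  show "best_feasible ?s'"
    using \<open>best_feasible s\<close> T unfolding commit_cell_def Let_def best_feasible_def by auto
  show "s (reg 9) \<le> ?s' (reg 9)" by (simp add: commit_cell_def Let_def)
  show "reached (table jj ?s' q) \<longrightarrow> cell_profit (table jj ?s' q) \<le> ?s' (reg 9)"
    using table by (simp add: commit_cell_def Let_def)
qed

lemma cell_improve_spec:
  assumes I: "cell_inv jj b0 m (Suc q) s" and "rounded jj m \<le> q"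
    and e: "e = add_item m (dp_table jj m (q - rounded jj m))"
    and better: "reached e" "fst (dp_table jj m q) < fst e"
  shows "runs_to (Seq write_cell record_best) (s(reg 3 := real q, reg 12 := fst e))
    (\<lambda>t s'. cell_inv jj b0 m q s' \<and> t \<le> 7)"
proof -
  let ?r = "rounded jj m" and ?s2 = "s(reg 3 := real q, reg 12 := fst e)"
  have m: "m \<in> items_upto jj" and regs: "s (reg 2) = 2 ^ m" "s (reg 6) = v m" "s (reg 4) = real ?r"
    and "s 0 = real n" "s (reg 8) = real (table_base jj)"
    using I unfolding cell_inv_def table_ctx_def holds_input_def by blast+
  note improving = dp_step_improving[OF m assms(2) e better]
  have "runs_to (Seq write_cell record_best) ?s2 (\<lambda>t s'. t \<le> 7 \<and> s' = commit_cell jj q e ?s2)"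
    using \<open>s 0 = real n\<close> \<open>s (reg 8) = real (table_base jj)\<close> regs improving(1) assms(2)
    by (intro commit_cell_runs) (simp_all add: e add_item_def cell_inv_cells[OF I, symmetric])
  then show ?thesis
    by (rule runs_to_mono) (use cell_inv_commit[OF I assms(2) improving(2) better(1)] in simp)
qed

lemma cell_body_spec:
  assumes I: "cell_inv jj b0 m k s" and "rounded jj m < k"
  shows "runs_to cell_body s (\<lambda>t s'. cell_inv jj b0 m (k - 1) s' \<and> t \<le> 12)"
proof -
  obtain q where k: "k = Suc q" using \<open>rounded jj m < k\<close> by (cases k) auto
  then have I: "cell_inv jj b0 m (Suc q) s" and "rounded jj m \<le> q" using assms by auto
  define e where "e = add_item m (dp_table jj m (q - rounded jj m))"
  define s2 where "s2 = s(reg 3 := real q, reg 12 := fst e)"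
  have "s 0 = real n" "s 1 = B" "s (reg 8) = real (table_base jj)"
    using I unfolding cell_inv_def table_ctx_def holds_input_def by blast+
  then have "s2 0 = real n" "s2 1 = B" "s2 (reg 8) = real (table_base jj)" "s2 (reg 3) = real q"
    by (simp_all add: s2_def)
  moreover have "table jj s2 q = dp_table jj m q"
    using cell_inv_cells[OF I, of q] by (simp add: s2_def)
  ultimately have test:
    "bval (And (geq (var 12) (Minus (N 3) (R (N 1)))) (Less (R (cell_addr 0 (var 3))) (var 12))) s2
      \<longleftrightarrow> reached e \<and> fst (dp_table jj m q) < fst e"
    using aval_read_current_cell(1)[of s2 jj q] by (simp add: geq_def not_less s2_def)
  have "runs_to update_cell s2 (\<lambda>t s'. cell_inv jj b0 m q s' \<and> t \<le> 10)"
    unfolding update_cell_def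
  proof (rule runs_to_If)
    assume "bval (And (geq (var 12) (Minus (N 3) (R (N 1)))) (Less (R (cell_addr 0 (var 3))) (var 12))) s2"
    with test have "reached e" "fst (dp_table jj m q) < fst e" by auto
    from cell_improve_spec[OF I \<open>rounded jj m \<le> q\<close> e_def this]
    show "runs_to (Seq write_cell record_best) s2 (\<lambda>t s'. cell_inv jj b0 m q s' \<and> Suc t \<le> 10)"
      unfolding s2_def by (rule runs_to_mono) simp
  next
    assume "\<not> bval (And (geq (var 12) (Minus (N 3) (R (N 1)))) (Less (R (cell_addr 0 (var 3))) (var 12))) s2"
    with test have "dp_step jj m (dp_table jj m) q = dp_table jj m q"
      unfolding dp_step_def Let_def e_def by auto
    from cell_keep[OF I \<open>rounded jj m \<le> q\<close> this]
    show "runs_to SKIP s2 (\<lambda>t s'. cell_inv jj b0 m q s' \<and> Suc t \<le> 10)"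
      unfolding s2_def by (intro runs_to_Skip) simp
  qed
  then have "runs_to cell_body s (\<lambda>t s'. cell_inv jj b0 m q s' \<and> t \<le> 12)"
    unfolding cell_body_def
  proof (rule runs_to_Seq_exact[rotated, OF runs_to_mono])
    show "runs_to compute_candidate s (\<lambda>t s'. t = 2 \<and> s' = s2)"
      using compute_candidate_runs[OF I \<open>rounded jj m \<le> q\<close>] unfolding s2_def e_def .
  qed simp
  then show ?thesis using k by simp
qed

lemma cell_loop_spec:
  assumes "cell_inv jj b0 m k s"
  shows "runs_to cell_loop s (\<lambda>t s'. cell_inv jj b0 m (rounded jj m) s' \<and> t \<le> (k + 1) * 13)"
proof -
  have "rounded jj m \<le> k" using assms unfolding cell_inv_def by blast
  have "runs_to (While (Less (var 4) (var 3)) cell_body) s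
      (\<lambda>t s'. cell_inv jj b0 m (rounded jj m) s' \<and> t \<le> (k - rounded jj m + 1) * (12 + 1))"
  proof (rule runs_to_While_down[where I = "cell_inv jj b0 m", OF assms \<open>rounded jj m \<le> k\<close>])
    fix k' s' assume "cell_inv jj b0 m k' s'"
    then have "s' 0 = real n" "s' (reg 3) = real k'" "s' (reg 4) = real (rounded jj m)"
      unfolding cell_inv_def table_ctx_def holds_input_def by blast+
    then show "bval (Less (var 4) (var 3)) s' \<longleftrightarrow> rounded jj m < k'" by simp
  qed (fact cell_body_spec)
  then show ?thesis
    unfolding cell_loop_def by (rule runs_to_mono) auto
qed

definition item_inv :: "nat \<Rightarrow> real \<Rightarrow> nat \<Rightarrow> state \<Rightarrow> bool" where
  "item_inv jj b0 m s \<longleftrightarrow> table_ctx jj b0 s \<and> m \<le> n \<and> s (reg 1) = real m \<and> s (reg 2) = 2 ^ m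
     \<and> (\<forall>q\<le>Q. table jj s q = dp_table jj m q)"

lemma next_item_runs:
  assumes "s 0 = real n" "s (reg 1) = real m" "s (reg 2) = 2 ^ m"
  shows "runs_to next_item s (\<lambda>t s'. t = 2 \<and> s' = s(reg 2 := 2 ^ Suc m, reg 1 := real (Suc m)))"
proof -
  have "runs_to (Assign (var_addr 2) (Mult (N 2) (var 2))) s (\<lambda>t s'. t = 1 \<and> s' = s(reg 2 := 2 ^ Suc m))"
    by (rule runs_to_assign_var[where s = s]) (use assms in simp_all)
  moreover have "runs_to (Assign (var_addr 1) (Plus (var 1) (N 1))) (s(reg 2 := 2 ^ Suc m))
      (\<lambda>t s'. 1 + t = 2 \<and> s' = s(reg 2 := 2 ^ Suc m, reg 1 := real (Suc m)))"
    by (rule runs_to_assign_var) (use assms in simp_all)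
  ultimately show ?thesis
    unfolding next_item_def by (rule runs_to_Seq_exact)
qed

definition item_done :: "nat \<Rightarrow> real \<Rightarrow> nat \<Rightarrow> state \<Rightarrow> bool" where
  "item_done jj b0 m s \<longleftrightarrow> table_ctx jj b0 s \<and> s (reg 1) = real m \<and> s (reg 2) = 2 ^ m
     \<and> (\<forall>q\<le>Q. table jj s q = dp_table jj (Suc m) q)"

lemma item_done_cell_inv: "cell_inv jj b0 m (rounded jj m) s \<Longrightarrow> item_done jj b0 m s"
  unfolding cell_inv_def item_done_def by (auto simp: dp_step_below)

lemma item_inv_next_item:
  assumes "item_done jj b0 m s" "m < n"
  shows "runs_to next_item s (\<lambda>t s'. item_inv jj b0 (Suc m) s' \<and> t = 2)"
proof -
  have "s 0 = real n" "s (reg 1) = real m" "s (reg 2) = 2 ^ m"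
    using assms(1) unfolding item_done_def table_ctx_def holds_input_def by blast+
  from next_item_runs[OF this] show ?thesis
    by (rule runs_to_mono) (use assms in \<open>simp add: item_inv_def item_done_def\<close>)
qed

lemma relax_item_spec:
  assumes I: "item_inv jj b0 m s" and "m < n" "m \<in> items_upto jj" "s (reg 6) = v m"
  shows "runs_to relax_item s (\<lambda>t s'. item_done jj b0 m s' \<and> t \<le> 13 * Q + 41)"
proof -
  have "table_ctx jj b0 s" and regs: "s (reg 1) = real m" "s (reg 2) = 2 ^ m"
    and cells: "\<forall>q\<le>Q. table jj s q = dp_table jj m q"
    using I unfolding item_inv_def by blast+
  then have n0: "s 0 = real n" and "s 2 = eps" "s (4 + 2 * m) = c m"
    and "s (reg 11) = v jj" "s (reg 7) = real Q" "0 < v jj"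
    using \<open>m < n\<close> unfolding table_ctx_def holds_input_def by auto
  have "0 < v m" using assms(3) unfolding items_upto_def by simp
  define s4 where "s4 = s(reg 5 := c m / v m, reg 4 := real (rounded jj m), reg 3 := real (Q + 1))"
  have "aval (Divide (cost_in (var 1)) (var 6)) s = c m / v m"
    using aval_cost_in[of "var 1" s m] n0 regs \<open>s (4 + 2 * m) = c m\<close> assms(4) by simp
  then have a5: "runs_to (Assign (var_addr 5) (Divide (cost_in (var 1)) (var 6))) s
      (\<lambda>t s'. t = 1 \<and> s' = s(reg 5 := c m / v m))"
    by (intro runs_to_assign_var[where s = s, OF n0]) simp_all
  have "aval (Floor (Divide (Mult (var 6) (R (N 0))) (Mult (R (N 2)) (var 11)))) (s(reg 5 := c m / v m))
      = real (rounded jj m)"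
    using n0 assms(4) \<open>s 2 = eps\<close> \<open>s (reg 11) = v jj\<close> \<open>0 < v m\<close> \<open>0 < v jj\<close> eps_pos
    unfolding rounded_def by simp
  then have a4: "runs_to (Assign (var_addr 4) (Floor (Divide (Mult (var 6) (R (N 0))) (Mult (R (N 2)) (var 11)))))
      (s(reg 5 := c m / v m)) (\<lambda>t s'. t = 1 \<and> s' = s(reg 5 := c m / v m, reg 4 := real (rounded jj m)))"
    using n0 by (intro runs_to_assign_var) simp_all
  have "aval (Plus (var 7) (N 1)) (s(reg 5 := c m / v m, reg 4 := real (rounded jj m))) = real (Q + 1)"
    using n0 \<open>s (reg 7) = real Q\<close> by simp
  then have a3: "runs_to (Assign (var_addr 3) (Plus (var 7) (N 1))) (s(reg 5 := c m / v m, reg 4 := real (rounded jj m)))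
      (\<lambda>t s'. t = 1 \<and> s' = s4)"
    using n0 unfolding s4_def by (intro runs_to_assign_var) simp_all
  have "cell_inv jj b0 m (Q + 1) s4"
    unfolding cell_inv_def s4_def
    using \<open>table_ctx jj b0 s\<close> regs assms(3,4) rounded_le_Q[OF assms(3)] cells by simp
  from cell_loop_spec[OF this]
  have "runs_to cell_loop s4 (\<lambda>t s'. item_done jj b0 m s' \<and> 1 + (1 + (1 + t)) \<le> 13 * Q + 41)"
    by (rule runs_to_mono) (auto dest: item_done_cell_inv)
  then show ?thesis
    unfolding relax_item_def by (intro runs_to_Seq_exact[OF a5 runs_to_Seq_exact[OF a4 runs_to_Seq_exact[OF a3]]])
qed

lemma item_body_spec:
  assumes I: "item_inv jj b0 m s" and "m < n"
  shows "runs_to item_body s (\<lambda>t s'. item_inv jj b0 (Suc m) s' \<and> t \<le> 13 * Q + 45)"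
proof -
  have "holds_input s" "s (reg 1) = real m" "s (reg 11) = v jj"
    using I unfolding item_inv_def table_ctx_def by blast+
  then have n0: "s 0 = real n" and "s (3 + 2 * m) = v m"
    using \<open>m < n\<close> unfolding holds_input_def by auto
  define s1 where "s1 = s(reg 6 := v m)"
  have I1: "item_inv jj b0 m s1" using I unfolding item_inv_def s1_def by simp
  have a6: "runs_to (Assign (var_addr 6) (val_in (var 1))) s (\<lambda>t s'. t = 1 \<and> s' = s1)"
    using aval_val_in[of "var 1" s m] n0 \<open>s (reg 1) = real m\<close> \<open>s (3 + 2 * m) = v m\<close>
    by (intro runs_to_assign_var[where s = s]) (simp_all add: s1_def)
  have test: "bval (And (Less (N 0) (var 6)) (geq (var 11) (var 6))) s1 \<longleftrightarrow> m \<in> items_upto jj"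
    using n0 \<open>s (reg 11) = v jj\<close> \<open>m < n\<close> by (auto simp: geq_def items_upto_def s1_def)
  have "runs_to (If (And (Less (N 0) (var 6)) (geq (var 11) (var 6))) relax_item SKIP) s1
      (\<lambda>t s'. item_done jj b0 m s' \<and> t \<le> 13 * Q + 42)"
  proof (rule runs_to_If)
    assume "bval (And (Less (N 0) (var 6)) (geq (var 11) (var 6))) s1"
    then have "m \<in> items_upto jj" using test by blast
    from relax_item_spec[OF I1 \<open>m < n\<close> this]
    show "runs_to relax_item s1 (\<lambda>t s'. item_done jj b0 m s' \<and> Suc t \<le> 13 * Q + 42)"
      by (rule runs_to_mono) (auto simp: s1_def)
  next
    assume "\<not> bval (And (Less (N 0) (var 6)) (geq (var 11) (var 6))) s1"
    then have "m \<notin> items_upto jj" using test by blast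
    then have "item_done jj b0 m s1" using I1 unfolding item_inv_def item_done_def by simp
    then show "runs_to SKIP s1 (\<lambda>t s'. item_done jj b0 m s' \<and> Suc t \<le> 13 * Q + 42)"
      by (intro runs_to_Skip) simp
  qed
  then have "runs_to (Seq (If (And (Less (N 0) (var 6)) (geq (var 11) (var 6))) relax_item SKIP) next_item) s1
      (\<lambda>t s'. item_inv jj b0 (Suc m) s' \<and> 1 + t \<le> 13 * Q + 45)"
    by (rule runs_to_Seq[OF runs_to_mono]) (auto elim!: runs_to_mono[OF item_inv_next_item[OF _ \<open>m < n\<close>]])
  then show ?thesis
    unfolding item_body_def by (rule runs_to_Seq_exact[OF a6])
qed

lemma item_loop_spec:
  assumes "item_inv jj b0 0 s"
  shows "runs_to item_loop s (\<lambda>t s'. item_inv jj b0 n s' \<and> t \<le> (n + 1) * (13 * Q + 46))"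
proof -
  have "runs_to (While (Less (var 1) (R (N 0))) item_body) s
      (\<lambda>t s'. item_inv jj b0 n s' \<and> t \<le> (n - 0 + 1) * (13 * Q + 45 + 1))"
  proof (rule runs_to_While_up[where I = "item_inv jj b0", OF assms])
    fix m s' assume "item_inv jj b0 m s'"
    then have "s' 0 = real n" "s' (reg 1) = real m"
      unfolding item_inv_def table_ctx_def holds_input_def by blast+
    then show "bval (Less (var 1) (R (N 0))) s' \<longleftrightarrow> m < n" by simp
  next
    fix m s' assume "item_inv jj b0 m s'" "m < n"
    then show "runs_to item_body s' (\<lambda>t s''. item_inv jj b0 (Suc m) s'' \<and> t \<le> 13 * Q + 45)"
      by (rule item_body_spec)
  qed simp
  then show ?thesis
    unfolding item_loop_def by (rule runs_to_mono) (simp add: ac_simps)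
qed

definition scale_inv :: "nat \<Rightarrow> state \<Rightarrow> bool" where
  "scale_inv jj s \<longleftrightarrow> holds_input s \<and> jj \<le> n \<and> s (reg 0) = real jj \<and> s (reg 7) = real Q \<and> best_feasible s
     \<and> dominates_tables jj (s (reg 9)) \<and> (\<forall>a\<ge>table_base jj. s a = 0)"

lemma dominates_tables_Suc:
  assumes "item_inv jj b0 n s" "dominates_tables jj b0"
  shows "dominates_tables (Suc jj) (s (reg 9))"
proof -
  have "b0 \<le> s (reg 9)" and "0 < v jj"
    and "\<forall>q\<le>Q. reached (table jj s q) \<longrightarrow> cell_profit (table jj s q) \<le> s (reg 9)"
    and "\<forall>q\<le>Q. table jj s q = dp_table jj n q"
    using assms(1) unfolding item_inv_def table_ctx_def by blast+
  then show ?thesis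
    using dominates_tables_mono[OF assms(2)] unfolding dominates_tables_def less_Suc_eq by auto
qed

definition scale_done :: "nat \<Rightarrow> state \<Rightarrow> bool" where
  "scale_done jj s \<longleftrightarrow> holds_input s \<and> s (reg 0) = real jj \<and> s (reg 7) = real Q \<and> best_feasible s
     \<and> dominates_tables (Suc jj) (s (reg 9)) \<and> (\<forall>a\<ge>table_base (Suc jj). s a = 0)"

lemma scale_inv_next:
  assumes "scale_done jj s" "jj < n"
  shows "runs_to (Assign (var_addr 0) (Plus (var 0) (N 1))) s (\<lambda>t s'. scale_inv (Suc jj) s' \<and> t = 1)"
proof (rule runs_to_assign_var)
  show "s 0 = real n" using assms(1) unfolding scale_done_def holds_input_def by blast
  then show "aval (Plus (var 0) (N 1)) s = real (Suc jj)" using assms(1) unfolding scale_done_def by simp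
  show "scale_inv (Suc jj) (s(reg 0 := real (Suc jj))) \<and> 1 = 1"
    using assms unfolding scale_done_def scale_inv_def by simp
qed

lemma scale_inv_zero_Suc: "scale_inv jj s \<Longrightarrow> \<forall>a\<ge>table_base (Suc jj). s a = 0"
  unfolding scale_inv_def using less_imp_le[OF table_base_less_table_base_Suc(1)[of jj]] by auto

lemma item_inv_fresh_table:
  assumes I: "scale_inv jj s" and "jj < n" "0 < v jj" "s (reg 11) = v jj"
  shows "item_inv jj (s (reg 9)) 0 (s(reg 8 := real (table_base jj), table_base jj := 3, reg 1 := 0, reg 2 := 1))"
    (is "item_inv jj _ 0 ?s")
proof -
  have "holds_input s" "best_feasible s" and zero: "\<forall>a\<ge>table_base jj. s a = 0"
    using I unfolding scale_inv_def by blast+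
  have "table jj ?s = dp_table jj 0"
  proof
    fix q
    show "table jj ?s q = dp_table jj 0 q"
      using zero by (cases "q = 0") (simp_all add: cell_at_def)
  qed
  then show ?thesis
    unfolding item_inv_def table_ctx_def
    using assms \<open>holds_input s\<close> \<open>best_feasible s\<close> best_feasible_nonneg[OF \<open>best_feasible s\<close>]
      scale_inv_zero_Suc[OF I] B_le_1
    by (auto simp: scale_inv_def cell_profit_def)
qed

lemma fill_table_spec:
  assumes I: "scale_inv jj s" and "jj < n" "0 < v jj" "s (reg 11) = v jj"
  shows "runs_to fill_table s (\<lambda>t s'. scale_done jj s' \<and> t \<le> (n + 1) * (13 * Q + 46) + 4)"
proof -
  have "s 0 = real n" "s (reg 0) = real jj" "s (reg 7) = real Q"
    and prev: "dominates_tables jj (s (reg 9))"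
    using I unfolding scale_inv_def holds_input_def by blast+
  let ?b = "table_base jj"
  define s2 where "s2 = s(reg 8 := real ?b)"
  have a8: "runs_to (Assign (var_addr 8) (Plus (var_addr 16) (Mult (Mult (N 3) (Plus (var 7) (N 1))) (var 0)))) s
      (\<lambda>t s'. t = 1 \<and> s' = s2)"
    using \<open>s 0 = real n\<close> \<open>s (reg 0) = real jj\<close> \<open>s (reg 7) = real Q\<close>
    by (intro runs_to_assign_var[where s = s]) (simp_all add: s2_def table_base_def algebra_simps)
  have s2: "s2 0 = real n" "s2 (reg 8) = real ?b" "(s2(?b := 3)) 0 = real n" "(s2(?b := 3, reg 1 := 0)) 0 = real n"
    using \<open>s 0 = real n\<close> by (simp_all add: s2_def)
  have a0: "runs_to (Assign (cell_addr 0 (N 0)) (N 3)) s2 (\<lambda>t s'. t = 1 \<and> s' = s2(?b := 3))"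
    using s2 by (intro runs_to_assign_cell[where q = 0]) simp_all
  have a1: "runs_to (Assign (var_addr 1) (N 0)) (s2(?b := 3)) (\<lambda>t s'. t = 1 \<and> s' = s2(?b := 3, reg 1 := 0))"
    using s2 by (intro runs_to_assign_var) simp_all
  have a2: "runs_to (Assign (var_addr 2) (N 1)) (s2(?b := 3, reg 1 := 0))
      (\<lambda>t s'. t = 1 \<and> s' = s2(?b := 3, reg 1 := 0, reg 2 := 1))"
    using s2 by (intro runs_to_assign_var) simp_all
  from item_loop_spec[OF item_inv_fresh_table[OF assms]]
  have "runs_to item_loop (s2(?b := 3, reg 1 := 0, reg 2 := 1))
      (\<lambda>t s'. scale_done jj s' \<and> 1 + (1 + (1 + (1 + t))) \<le> (n + 1) * (13 * Q + 46) + 4)"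
    unfolding s2_def
  proof (rule runs_to_mono, safe)
    fix t s' assume "item_inv jj (s (reg 9)) n s'"
    then show "scale_done jj s'"
      using dominates_tables_Suc[OF _ prev] unfolding item_inv_def table_ctx_def scale_done_def by blast
  qed simp
  then show ?thesis
    unfolding fill_table_def
    by (intro runs_to_Seq_exact[OF a8 runs_to_Seq_exact[OF a0 runs_to_Seq_exact[OF a1 runs_to_Seq_exact[OF a2]]]])
qed

lemma scale_body_spec:
  assumes I: "scale_inv jj s" and "jj < n"
  shows "runs_to scale_body s (\<lambda>t s'. scale_inv (Suc jj) s' \<and> t \<le> (n + 1) * (13 * Q + 46) + 10)"
proof -
  have "holds_input s" "s (reg 0) = real jj" and prev: "dominates_tables jj (s (reg 9))"
    using I unfolding scale_inv_def by blast+
  then have n0: "s 0 = real n" and "s (3 + 2 * jj) = v jj"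
    using \<open>jj < n\<close> unfolding holds_input_def by auto
  define s1 where "s1 = s(reg 11 := v jj)"
  have a11: "runs_to (Assign (var_addr 11) (val_in (var 0))) s (\<lambda>t s'. t = 1 \<and> s' = s1)"
    using aval_val_in[of "var 0" s jj] n0 \<open>s (reg 0) = real jj\<close> \<open>s (3 + 2 * jj) = v jj\<close>
    by (intro runs_to_assign_var[where s = s]) (simp_all add: s1_def)
  have "scale_inv jj s1" using I unfolding scale_inv_def s1_def by auto
  have "runs_to (If (Less (N 0) (var 11)) fill_table SKIP) s1
      (\<lambda>t s'. scale_done jj s' \<and> t \<le> (n + 1) * (13 * Q + 46) + 5)"
  proof (rule runs_to_If)
    assume "bval (Less (N 0) (var 11)) s1"
    then have "0 < v jj" using n0 by (simp add: s1_def)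
    from fill_table_spec[OF \<open>scale_inv jj s1\<close> \<open>jj < n\<close> this]
    show "runs_to fill_table s1 (\<lambda>t s'. scale_done jj s' \<and> Suc t \<le> (n + 1) * (13 * Q + 46) + 5)"
      by (rule runs_to_mono) (auto simp: s1_def)
  next
    assume "\<not> bval (Less (N 0) (var 11)) s1"
    then have "\<not> 0 < v jj" using n0 by (simp add: s1_def)
    then have "dominates_tables (Suc jj) (s1 (reg 9))"
      using prev unfolding dominates_tables_def s1_def by (auto simp: less_Suc_eq)
    moreover have "\<forall>a\<ge>table_base (Suc jj). s1 a = 0"
      using scale_inv_zero_Suc[OF \<open>scale_inv jj s1\<close>] .
    ultimately have "scale_done jj s1"
      using \<open>scale_inv jj s1\<close> unfolding scale_inv_def scale_done_def by blast
    then show "runs_to SKIP s1 (\<lambda>t s'. scale_done jj s' \<and> Suc t \<le> (n + 1) * (13 * Q + 46) + 5)"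
      by (intro runs_to_Skip) simp
  qed
  then have "runs_to (Seq (If (Less (N 0) (var 11)) fill_table SKIP) (Assign (var_addr 0) (Plus (var 0) (N 1)))) s1
      (\<lambda>t s'. scale_inv (Suc jj) s' \<and> 1 + t \<le> (n + 1) * (13 * Q + 46) + 10)"
    by (rule runs_to_Seq[OF runs_to_mono]) (auto elim!: runs_to_mono[OF scale_inv_next[OF _ \<open>jj < n\<close>]])
  then show ?thesis
    unfolding scale_body_def by (rule runs_to_Seq_exact[OF a11])
qed

lemma scale_loop_spec:
  assumes "scale_inv 0 s"
  shows "runs_to scale_loop s (\<lambda>t s'. scale_inv n s' \<and> t \<le> (n + 1) * ((n + 1) * (13 * Q + 46) + 11))"
proof -
  have "runs_to (While (Less (var 0) (R (N 0))) scale_body) s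
      (\<lambda>t s'. scale_inv n s' \<and> t \<le> (n - 0 + 1) * ((n + 1) * (13 * Q + 46) + 10 + 1))"
  proof (rule runs_to_While_up[where I = scale_inv, OF assms])
    fix j s' assume "scale_inv j s'"
    then have "s' 0 = real n" "s' (reg 0) = real j"
      unfolding scale_inv_def holds_input_def by blast+
    then show "bval (Less (var 0) (R (N 0))) s' \<longleftrightarrow> j < n" by simp
  next
    fix j s' assume "scale_inv j s'" "j < n"
    then show "runs_to scale_body s' (\<lambda>t s''. scale_inv (Suc j) s'' \<and> t \<le> (n + 1) * (13 * Q + 46) + 10)"
      by (rule scale_body_spec)
  qed simp
  then show ?thesis
    unfolding scale_loop_def by (rule runs_to_mono) (simp add: ac_simps)
qed

definition decode_inv :: "nat set \<Rightarrow> nat \<Rightarrow> state \<Rightarrow> bool" where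
  "decode_inv T m s \<longleftrightarrow> holds_input s \<and> m \<le> n \<and> s (reg 1) = real m \<and> s (reg 2) = 2 ^ m
     \<and> s (reg 10) = bitcode T \<and> (\<forall>i<m. s (3 + 2 * n + i) \<noteq> 0 \<longleftrightarrow> i \<in> T)"

lemma decode_body_spec:
  assumes I: "decode_inv T m s" and "m < n" "finite T"
  shows "runs_to decode_body s (\<lambda>t s'. decode_inv T (Suc m) s' \<and> t \<le> 3)"
proof -
  have "holds_input s" and regs: "s (reg 1) = real m" "s (reg 2) = 2 ^ m" "s (reg 10) = bitcode T"
    and bits: "\<forall>i<m. s (3 + 2 * n + i) \<noteq> 0 \<longleftrightarrow> i \<in> T"
    using I unfolding decode_inv_def by blast+
  then have n0: "s 0 = real n" unfolding holds_input_def by blast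
  define y :: real where "y = of_int \<lfloor>bitcode T / 2 ^ m\<rfloor> - 2 * of_int \<lfloor>bitcode T / (2 * 2 ^ m)\<rfloor>"
  define s1 where "s1 = s(3 + 2 * n + m := y)"
  have "reg_index (3 + 2 * real n + real m) = 3 + 2 * n + m"
    using reg_index_of_nat[of "3 + 2 * n + m"] by simp
  then have out: "runs_to (Assign out_addr (Minus (Floor (Divide (var 10) (var 2)))
      (Mult (N 2) (Floor (Divide (var 10) (Mult (N 2) (var 2))))))) s (\<lambda>t s'. t = 1 \<and> s' = s1)"
    using n0 regs by (intro runs_to_Assign) (simp_all add: out_addr_def y_def s1_def)
  have "s1 0 = real n" "s1 (reg 1) = real m" "s1 (reg 2) = 2 ^ m"
    using n0 regs \<open>m < n\<close> by (simp_all add: s1_def)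
  note nx = next_item_runs[OF this]
  have inv: "decode_inv T (Suc m) (s1(reg 2 := 2 ^ Suc m, reg 1 := real (Suc m)))"
    unfolding decode_inv_def
    using \<open>holds_input s\<close> \<open>m < n\<close> regs bits bitcode_bit_iff[OF \<open>finite T\<close>, of m]
    by (auto simp: s1_def y_def less_Suc_eq)
  show ?thesis
    unfolding decode_body_def by (rule runs_to_Seq_exact[OF out runs_to_mono[OF nx]]) (use inv in simp)
qed

lemma decode_loop_spec:
  assumes "decode_inv T 0 s" "finite T"
  shows "runs_to decode_loop s (\<lambda>t s'. decode_inv T n s' \<and> t \<le> (n + 1) * 4)"
proof -
  have "runs_to (While (Less (var 1) (R (N 0))) decode_body) s
      (\<lambda>t s'. decode_inv T n s' \<and> t \<le> (n - 0 + 1) * (3 + 1))"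
  proof (rule runs_to_While_up[where I = "decode_inv T", OF assms(1)])
    fix m s' assume "decode_inv T m s'"
    then have "s' 0 = real n" "s' (reg 1) = real m"
      unfolding decode_inv_def holds_input_def by blast+
    then show "bval (Less (var 1) (R (N 0))) s' \<longleftrightarrow> m < n" by simp
  next
    fix m s' assume "decode_inv T m s'" "m < n"
    then show "runs_to decode_body s' (\<lambda>t s''. decode_inv T (Suc m) s'' \<and> t \<le> 3)"
      using decode_body_spec assms(2) by blast
  qed simp
  then show ?thesis
    unfolding decode_loop_def by simp
qed

lemma time_bound:
  "real (3 + (n + 1) * ((n + 1) * (13 * Q + 46) + 11) + (n + 1) * 4) \<le> 100 * (real n + 1 / eps + 1) ^ 5"
proof -
  define N where "N = real n + 1 / eps + 1"
  define a where "a = real n + 1"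
  have "0 < 1 / eps" using eps_pos by simp
  then have "1 \<le> N" "0 \<le> a" "a \<le> N" "real n \<le> N" "1 / eps \<le> N" unfolding N_def a_def by auto
  have "real Q \<le> real n * real n * (1 / eps)" unfolding Q_def using eps_pos by (simp add: of_nat_floor)
  also have "\<dots> \<le> N * N * N"
    using \<open>real n \<le> N\<close> \<open>1 / eps \<le> N\<close> \<open>0 < 1 / eps\<close> by (intro mult_mono) auto
  finally have "real Q \<le> N ^ 3" by (simp add: power3_eq_cube)
  have "a * a \<le> N ^ 2" using \<open>a \<le> N\<close> \<open>0 \<le> a\<close> by (simp add: power2_eq_square mult_mono)
  then have "a * a * real Q \<le> N ^ 2 * N ^ 3" using \<open>real Q \<le> N ^ 3\<close> \<open>0 \<le> a\<close> by (intro mult_mono) auto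
  moreover have "N ^ 2 \<le> N ^ 5" "N \<le> N ^ 5" "1 \<le> N ^ 5"
    using \<open>1 \<le> N\<close> by (auto intro: power_increasing[of 2 5 N, simplified] power_increasing[of 1 5 N, simplified])
  moreover have "real (3 + (n + 1) * ((n + 1) * (13 * Q + 46) + 11) + (n + 1) * 4)
      = 3 + 13 * (a * a * real Q) + 46 * (a * a) + 15 * a"
    unfolding a_def by (simp add: algebra_simps)
  ultimately show ?thesis
    using \<open>a * a \<le> N ^ 2\<close> \<open>a \<le> N\<close> unfolding N_def by (simp add: power_add[symmetric])
qed

lemma decode_output_spec:
  assumes "scale_inv n s"
  shows "runs_to decode_output s (\<lambda>t s'.
    (\<exists>T. feasible T \<and> output_set n s' = T \<and> dominates_tables n (knap_profit T)) \<and> t \<le> 2 + (n + 1) * 4)"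
proof -
  have "holds_input s" "best_feasible s" and dom: "dominates_tables n (s (reg 9))"
    using assms unfolding scale_inv_def by blast+
  then obtain T where T: "feasible T" "s (reg 9) = knap_profit T" "s (reg 10) = bitcode T"
    unfolding best_feasible_def by blast
  then have "finite T" "T \<subseteq> {..<n}" unfolding feasible_def using finite_subset by auto
  have n0: "s 0 = real n" using \<open>holds_input s\<close> unfolding holds_input_def by blast
  have a1: "runs_to (Assign (var_addr 1) (N 0)) s (\<lambda>t s'. t = 1 \<and> s' = s(reg 1 := 0))"
    using n0 by (intro runs_to_assign_var[where s = s]) simp_all
  have a2: "runs_to (Assign (var_addr 2) (N 1)) (s(reg 1 := 0)) (\<lambda>t s'. t = 1 \<and> s' = s(reg 1 := 0, reg 2 := 1))"
    using n0 by (intro runs_to_assign_var) simp_all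
  have "decode_inv T 0 (s(reg 1 := 0, reg 2 := 1))"
    using \<open>holds_input s\<close> T by (simp add: decode_inv_def)
  from decode_loop_spec[OF this \<open>finite T\<close>]
  have "runs_to decode_loop (s(reg 1 := 0, reg 2 := 1)) (\<lambda>t s'.
    (\<exists>T. feasible T \<and> output_set n s' = T \<and> dominates_tables n (knap_profit T)) \<and> 1 + (1 + t) \<le> 2 + (n + 1) * 4)"
  proof (rule runs_to_mono, safe)
    fix t s' assume "decode_inv T n s'"
    then have "output_set n s' = T"
      using \<open>T \<subseteq> {..<n}\<close> unfolding decode_inv_def output_set_def by auto
    then show "\<exists>T. feasible T \<and> output_set n s' = T \<and> dominates_tables n (knap_profit T)"
      using T dom by auto
  qed simp
  then show ?thesis
    unfolding decode_output_def by (rule runs_to_Seq_exact[OF a1 runs_to_Seq_exact[OF a2]])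
qed

lemma fptas_prog_spec:
  "runs_to fptas_prog (input_state n v c B eps) (\<lambda>t s'.
     (\<exists>T. feasible T \<and> output_set n s' = T \<and> dominates_tables n (knap_profit T))
     \<and> t \<le> 3 + (n + 1) * ((n + 1) * (13 * Q + 46) + 11) + (n + 1) * 4)"
proof -
  define s0 where "s0 = input_state n v c B eps"
  have "holds_input s0" unfolding s0_def by (rule holds_input_input_state)
  then have n0: "s0 0 = real n" and "s0 2 = eps" unfolding holds_input_def by auto
  have high: "\<And>a. 3 + 2 * n \<le> a \<Longrightarrow> s0 a = 0" unfolding s0_def by (rule input_state_high)
  define s1 where "s1 = s0(reg 7 := real Q)"
  have a7: "runs_to (Assign (var_addr 7) (Floor (Divide (Mult (R (N 0)) (R (N 0))) (R (N 2))))) s0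
      (\<lambda>t s'. t = 1 \<and> s' = s1)"
    using n0 \<open>s0 2 = eps\<close> eps_pos unfolding Q_def s1_def by (intro runs_to_assign_var[where s = s0]) simp_all
  have "feasible {}" "knap_profit {} = 0" "bitcode {} = 0"
    using B_pos by (simp_all add: feasible_def total_weight_def knap_profit_def total_value_def bitcode_def)
  then have "scale_inv 0 s1"
    unfolding scale_inv_def best_feasible_def dominates_tables_def
    using \<open>holds_input s0\<close> high by (auto simp: s1_def table_base_def reg_def)
  from scale_loop_spec[OF this]
  have "runs_to (Seq scale_loop decode_output) s1 (\<lambda>t s'.
     (\<exists>T. feasible T \<and> output_set n s' = T \<and> dominates_tables n (knap_profit T))
     \<and> 1 + t \<le> 3 + (n + 1) * ((n + 1) * (13 * Q + 46) + 11) + (n + 1) * 4)"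
    by (rule runs_to_Seq[OF runs_to_mono]) (auto elim!: runs_to_mono[OF decode_output_spec])
  then show ?thesis
    unfolding fptas_prog_def s0_def[symmetric] by (rule runs_to_Seq_exact[OF a7])
qed

lemma fptas_prog_correct:
  "\<exists>t s'. exec fptas_prog (input_state n v c B eps) t s' \<and>
     real t \<le> 100 * (real n + 1 / eps + 1) ^ 5 \<and>
     output_set n s' \<subseteq> {..<n} \<and>
     price (additive_fun v) c (output_set n s') \<le> ereal B \<and>
     (1 - eps) * max_profit {..<n} (additive_fun v) c B \<le> profit (additive_fun v) c (output_set n s')"
proof -
  obtain t s' T where "exec fptas_prog (input_state n v c B eps) t s'" and T: "feasible T" "output_set n s' = T"
    and dom: "dominates_tables n (knap_profit T)"
    and t: "t \<le> 3 + (n + 1) * ((n + 1) * (13 * Q + 46) + 11) + (n + 1) * 4"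
    using fptas_prog_spec unfolding runs_to_def by blast
  moreover have "real t \<le> 100 * (real n + 1 / eps + 1) ^ 5"
    using t time_bound by (meson of_nat_le_iff order_trans)
  moreover have "(1 - eps) * max_profit {..<n} (additive_fun v) c B \<le> knap_profit T"
    using dp_tables_approximate[OF dom knap_profit_nonneg[OF T(1)]] B_pos
    by (intro max_profit_le) auto
  moreover have "output_set n s' \<subseteq> {..<n}" unfolding output_set_def by auto
  ultimately show ?thesis
    using feasible_price_profit[OF T(1)] by (intro exI[of _ t] exI[of _ s']) simp
qed

end

theorem mainTheorem18:
  shows "\<exists>prog :: com. \<exists>C :: real. \<exists>k :: nat.
    \<forall>(n :: nat) (v :: nat \<Rightarrow> real) (c :: nat \<Rightarrow> real) (B :: real) (eps :: real).
      (\<forall>i<n. 0 \<le> v i) \<and> (\<forall>i<n. 0 \<le> c i) \<and> (\<Sum>i<n. v i) \<le> 1 \<and>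
      0 < B \<and> B \<le> 1 \<and> 0 < eps \<and> eps < 1 \<longrightarrow>
      (\<exists>t s'. exec prog (input_state n v c B eps) t s' \<and>
         real t \<le> C * (real n + 1 / eps + 1) ^ k \<and>
         output_set n s' \<subseteq> {..<n} \<and>
         price (additive_fun v) c (output_set n s') \<le> ereal B \<and>
         profit (additive_fun v) c (output_set n s')
           \<ge> (1 - eps) * max_profit {..<n} (additive_fun v) c B)"
proof (rule exI[of _ fptas_prog], rule exI[of _ "100 :: real"], rule exI[of _ "5 :: nat"], intro allI impI)
  fix n v c B eps
  assume "(\<forall>i<n. 0 \<le> (v :: nat \<Rightarrow> real) i) \<and> (\<forall>i<n. 0 \<le> (c :: nat \<Rightarrow> real) i) \<and> (\<Sum>i<n. v i) \<le> 1 \<and>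
      0 < (B :: real) \<and> B \<le> 1 \<and> 0 < (eps :: real) \<and> eps < 1"
  then interpret fptas n v c B eps by unfold_locales auto
  show "\<exists>t s'. exec fptas_prog (input_state n v c B eps) t s' \<and>
      real t \<le> 100 * (real n + 1 / eps + 1) ^ 5 \<and>
      output_set n s' \<subseteq> {..<n} \<and>
      price (additive_fun v) c (output_set n s') \<le> ereal B \<and>
      profit (additive_fun v) c (output_set n s') \<ge> (1 - eps) * max_profit {..<n} (additive_fun v) c B"
    using fptas_prog_correct by simp
qed

end
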